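(* Let $H$ be a Hilbert space, $\ell\ge1$, and $\mathbf{b}=[b_1,\dots,b_\ell]^t$ with $b_j\in\mathcal{B}(H)$. Then $b_1,\dots,b_\ell$ are linearly independent modulo $\mathcal{K}(H)$ if and only if there exists a weakly null net $(\xi_\alpha)_\alpha$ of unit vectors in $H$ such that $\lim_\alpha Q(\mathbf{b},\xi_\alpha)$ (exists and) is positive definite.
   Context: $\mathcal{K}(H)$ is the ideal of compact operators; linear independence modulo $\mathcal{K}(H)$ means the cosets $b_j+\mathcal{K}(H)$ are linearly independent in $\mathcal{B}(H)/\mathcal{K}(H)$. For $\xi\in H$, $Q(\mathbf{b},\xi)=(\langle b_j\xi,b_i\xi\rangle)_{i,j=1}^\ell\in M_\ell(\mathbb{C})$. *)

theory Defs
  imports "HOL-Analysis.Analysis"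
begin

text \<open>Complex inner product spaces (not available in the distribution libraries).
  The inner product is linear in the first argument, conjugate-linear in the second.\<close>

class complex_inner = real_normed_vector +
  fixes scaleC :: "complex \<Rightarrow> 'a \<Rightarrow> 'a"
    and cinner :: "'a \<Rightarrow> 'a \<Rightarrow> complex"
  assumes scaleC_add_right: "scaleC a (x + y) = scaleC a x + scaleC a y"
    and scaleC_add_left: "scaleC (a + b) x = scaleC a x + scaleC b x"
    and scaleC_scaleC: "scaleC a (scaleC b x) = scaleC (a * b) x"
    and scaleC_one: "scaleC 1 x = x"
    and scaleR_scaleC: "scaleR r x = scaleC (complex_of_real r) x"
    and cinner_add_left: "cinner (x + y) z = cinner x z + cinner y z"
    and cinner_scaleC_left: "cinner (scaleC a x) y = a * cinner x y"
    and cinner_commute: "cinner y x = cnj (cinner x y)"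
    and cinner_self_real: "Im (cinner x x) = 0"
    and cinner_self_eq_0: "cinner x x = 0 \<longleftrightarrow> x = 0"
    and norm_eq_sqrt_cinner: "norm x = sqrt (Re (cinner x x))"

class chilbert_space = complex_inner + complete_space

definition bounded_op :: "('a::complex_inner \<Rightarrow> 'a) \<Rightarrow> bool" where
  "bounded_op f \<longleftrightarrow> (\<forall>x y. f (x + y) = f x + f y) \<and> (\<forall>c x. f (scaleC c x) = scaleC c (f x))
     \<and> (\<exists>K. \<forall>x. norm (f x) \<le> norm x * K)"

definition compact_op :: "('a::complex_inner \<Rightarrow> 'a) \<Rightarrow> bool" where
  "compact_op f \<longleftrightarrow> bounded_op f \<and> compact (closure (f ` {x. norm x \<le> 1}))"

definition lin_indep_mod_compact :: "nat \<Rightarrow> (nat \<Rightarrow> 'a::complex_inner \<Rightarrow> 'a) \<Rightarrow> bool" where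
  "lin_indep_mod_compact l b \<longleftrightarrow>
     (\<forall>c :: nat \<Rightarrow> complex. compact_op (\<lambda>x. \<Sum>j<l. scaleC (c j) (b j x)) \<longrightarrow> (\<forall>j<l. c j = 0))"

definition Qmat :: "(nat \<Rightarrow> 'a::complex_inner \<Rightarrow> 'a) \<Rightarrow> 'a \<Rightarrow> nat \<Rightarrow> nat \<Rightarrow> complex" where
  "Qmat b \<xi> i j = cinner (b j \<xi>) (b i \<xi>)"

definition pos_def_mat :: "nat \<Rightarrow> (nat \<Rightarrow> nat \<Rightarrow> complex) \<Rightarrow> bool" where
  "pos_def_mat l M \<longleftrightarrow> (\<forall>i<l. \<forall>j<l. M j i = cnj (M i j)) \<and>
     (\<forall>v :: nat \<Rightarrow> complex. (\<exists>i<l. v i \<noteq> 0) \<longrightarrow>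
        0 < Re (\<Sum>i<l. \<Sum>j<l. cnj (v i) * M i j * v j))"

end

theory Submission
  imports Defs
begin

text \<open>
  Write \<open>T\<^sub>v = \<Sum>\<^sub>j v\<^sub>j b\<^sub>j\<close>, so that \<open>v\<^sup>* Q(b, \<xi>) v = \<parallel>T\<^sub>v \<xi>\<parallel>\<^sup>2\<close>.
  A compact operator maps weakly null nets of unit vectors to norm-null ones, so a positive
  definite limit of \<open>Q(b, \<xi>\<^sub>\<alpha>)\<close> rules out compact nontrivial combinations.

  Conversely, if no \<open>T\<^sub>v\<close> with \<open>v \<noteq> 0\<close> is compact, then a compactness argument on the
  \<open>\<ell>\<^sup>1\<close>-unit sphere gives \<open>\<delta> > 0\<close> such that, orthogonally to any finite set, each \<open>T\<^sub>v\<close> has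
  a unit vector \<open>x\<close> with \<open>\<parallel>T\<^sub>v x\<parallel> \<ge> \<delta> |v|\<^sub>1\<close> (otherwise \<open>T\<^sub>v\<close> would be small on
  a subspace of finite codimension, hence compact).  For a finite net of the sphere, choose such
  witnesses one after the other so that they and their images under all \<open>b\<^sub>j\<close> are mutually
  orthogonal; their normalised sum \<open>\<xi>\<close> then satisfies \<open>\<parallel>T\<^sub>v \<xi>\<parallel>\<^sup>2 \<ge> \<gamma> |v|\<^sub>1\<^sup>2\<close> for all
  \<open>v\<close> at once.  Directing these vectors by orthogonality to finite sets yields a weakly null
  net, a finer net makes \<open>Q(b, \<xi>)\<close> converge, and the bound passes to the limit.
\<close>

section \<open>Complex inner product spaces\<close>

declare scaleC_one [simp]

lemma scaleC_zero_left [simp]: "scaleC 0 (x::'a::complex_inner) = 0"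
  using scaleR_scaleC[of 0 x] by simp

lemma scaleC_zero_right [simp]: "scaleC a (0::'a::complex_inner) = 0"
  using scaleC_add_right[of a 0 0] by simp

lemma scaleC_minus_left: "scaleC (- a) (x::'a::complex_inner) = - scaleC a x"
  using scaleC_add_left[of "- a" a x] by (simp add: eq_neg_iff_add_eq_0)

lemma scaleC_diff_left: "scaleC (a - b) (x::'a::complex_inner) = scaleC a x - scaleC b x"
  by (simp only: diff_conv_add_uminus scaleC_add_left scaleC_minus_left)

lemma scaleC_sum_right: "scaleC a (sum f A) = (\<Sum>i\<in>A. scaleC a (f i::'a::complex_inner))"
  by (induction A rule: infinite_finite_induct) (auto simp: scaleC_add_right)

lemma scaleC_eq_scaleR_Re_Im:
  "scaleC z (x::'a::complex_inner) = scaleR (Re z) x + scaleR (Im z) (scaleC \<i> x)"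
proof -
  have "complex_of_real (Re z) + complex_of_real (Im z) * \<i> = z"
    by (simp add: complex_eq_iff)
  then have "scaleC z x = scaleC (complex_of_real (Re z) + complex_of_real (Im z) * \<i>) x"
    by (simp only:)
  also have "\<dots> = scaleR (Re z) x + scaleR (Im z) (scaleC \<i> x)"
    by (simp add: scaleC_add_left scaleR_scaleC scaleC_scaleC)
  finally show ?thesis .
qed

lemma continuous_on_scaleC_left [continuous_intros]:
  "continuous_on S f \<Longrightarrow> continuous_on S (\<lambda>z. scaleC (f z) (x::'a::complex_inner))"
proof -
  have "(\<lambda>z. scaleC (f z) x) = (\<lambda>z. scaleR (Re (f z)) x + scaleR (Im (f z)) (scaleC \<i> x))"
    by (rule ext, rule scaleC_eq_scaleR_Re_Im)
  then show "continuous_on S f \<Longrightarrow> ?thesis"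
    by (simp only:) (intro continuous_intros)
qed

lemma cinner_zero_left [simp]: "cinner 0 (y::'a::complex_inner) = 0"
  using cinner_scaleC_left[of 0 y y] by simp

lemma cinner_zero_right [simp]: "cinner (x::'a::complex_inner) 0 = 0"
  by (subst cinner_commute) simp

lemma cinner_add_right: "cinner (x::'a::complex_inner) (y + z) = cinner x y + cinner x z"
  by (subst (1 2 3) cinner_commute) (simp add: cinner_add_left)

lemma cinner_scaleC_right: "cinner (x::'a::complex_inner) (scaleC a y) = cnj a * cinner x y"
  by (subst (1 2) cinner_commute) (simp add: cinner_scaleC_left)

lemma cinner_minus_left: "cinner (- x::'a::complex_inner) y = - cinner x y"
  using cinner_add_left[of "- x" x y] by (simp add: eq_neg_iff_add_eq_0)

lemma cinner_minus_right: "cinner (x::'a::complex_inner) (- y) = - cinner x y"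
  by (subst (1 2) cinner_commute) (simp add: cinner_minus_left)

lemma cinner_diff_left: "cinner (x - y::'a::complex_inner) z = cinner x z - cinner y z"
  by (simp only: diff_conv_add_uminus cinner_add_left cinner_minus_left)

lemma cinner_diff_right: "cinner (x::'a::complex_inner) (y - z) = cinner x y - cinner x z"
  by (simp only: diff_conv_add_uminus cinner_add_right cinner_minus_right)

lemma cinner_sum_left: "cinner (sum f A) (y::'a::complex_inner) = (\<Sum>i\<in>A. cinner (f i) y)"
  by (induction A rule: infinite_finite_induct) (auto simp: cinner_add_left)

lemma cinner_sum_right: "cinner (x::'a::complex_inner) (sum f A) = (\<Sum>i\<in>A. cinner x (f i))"
  by (induction A rule: infinite_finite_induct) (auto simp: cinner_add_right)

lemma Re_cinner_commute: "Re (cinner (y::'a::complex_inner) x) = Re (cinner x y)"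
  by (subst cinner_commute) simp

lemma power2_norm_eq_cinner: "(norm (x::'a::complex_inner))\<^sup>2 = Re (cinner x x)"
proof -
  have "0 \<le> Re (cinner x x)"
    by (metis norm_eq_sqrt_cinner norm_ge_zero real_sqrt_ge_0_iff)
  then show ?thesis by (simp add: norm_eq_sqrt_cinner)
qed

lemma cinner_self_eq_power2_norm: "cinner (x::'a::complex_inner) x = complex_of_real ((norm x)\<^sup>2)"
  by (simp add: power2_norm_eq_cinner complex_eq_iff cinner_self_real)

lemma norm_scaleC: "norm (scaleC a (x::'a::complex_inner)) = cmod a * norm x"
proof -
  have "cinner (scaleC a x) (scaleC a x) = (a * cnj a) * cinner x x"
    by (simp add: cinner_scaleC_left cinner_scaleC_right mult_ac)
  also have "\<dots> = complex_of_real ((cmod a * norm x)\<^sup>2)"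
    by (simp only: complex_norm_square[symmetric] cinner_self_eq_power2_norm
        power_mult_distrib of_real_mult)
  finally have "(norm (scaleC a x))\<^sup>2 = (cmod a * norm x)\<^sup>2"
    by (simp add: power2_norm_eq_cinner)
  then show ?thesis by (simp add: power2_eq_iff_nonneg)
qed

lemma power2_norm_add:
  "(norm (x + y::'a::complex_inner))\<^sup>2 = (norm x)\<^sup>2 + (norm y)\<^sup>2 + 2 * Re (cinner x y)"
  by (simp add: power2_norm_eq_cinner cinner_add_left cinner_add_right Re_cinner_commute[of y x])

lemma power2_norm_diff:
  "(norm (x - y::'a::complex_inner))\<^sup>2 = (norm x)\<^sup>2 + (norm y)\<^sup>2 - 2 * Re (cinner x y)"
  using power2_norm_add[of x "- y"] by (simp add: cinner_minus_right)

lemma pythagoras: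
  "cinner x y = 0 \<Longrightarrow> (norm (x + y::'a::complex_inner))\<^sup>2 = (norm x)\<^sup>2 + (norm y)\<^sup>2"
  by (simp add: power2_norm_add)

lemma parallelogram_law:
  "(norm (x + y::'a::complex_inner))\<^sup>2 + (norm (x - y))\<^sup>2 = 2 * (norm x)\<^sup>2 + 2 * (norm y)\<^sup>2"
  by (simp add: power2_norm_add power2_norm_diff)

lemma norm_cinner_le: "cmod (cinner (x::'a::complex_inner) y) \<le> norm x * norm y"
proof (cases "y = 0")
  case False
  define t where "t = cinner x y / complex_of_real ((norm y)\<^sup>2)"
  \<comment> \<open>\<open>scaleC t y\<close> is the orthogonal projection of \<open>x\<close> onto the line through \<open>y\<close>\<close>
  have "cinner (x - scaleC t y) (scaleC t y) = 0"
    using False by (simp add: t_def cinner_diff_left cinner_scaleC_left cinner_scaleC_right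
        cinner_self_eq_power2_norm)
  from pythagoras[OF this] have "(norm (scaleC t y))\<^sup>2 \<le> (norm x)\<^sup>2"
    by simp
  then have "norm (scaleC t y) \<le> norm x"
    using norm_ge_zero power2_le_imp_le by blast
  moreover have "norm (scaleC t y) = cmod (cinner x y) / norm y"
    using False by (simp add: t_def norm_scaleC norm_divide norm_mult power2_eq_square)
  ultimately show ?thesis
    using False by (simp add: divide_le_eq)
qed simp

lemma power2_norm_sum_orthogonal:
  fixes f :: "'b \<Rightarrow> 'a::complex_inner"
  assumes "finite V" and "\<And>v w. v \<in> V \<Longrightarrow> w \<in> V \<Longrightarrow> v \<noteq> w \<Longrightarrow> cinner (f v) (f w) = 0"
  shows "(norm (\<Sum>v\<in>V. f v))\<^sup>2 = (\<Sum>v\<in>V. (norm (f v))\<^sup>2)"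
  using assms
proof (induction V rule: finite_induct)
  case (insert a V)
  then have "cinner (f a) (\<Sum>v\<in>V. f v) = 0"
    by (auto simp: cinner_sum_right intro!: sum.neutral)
  with insert show ?case
    by (simp add: pythagoras)
qed simp

section \<open>Bounded operators and the Riesz representation theorem\<close>

lemma bounded_op_add: "bounded_op T \<Longrightarrow> T (x + y) = T x + T y"
  unfolding bounded_op_def by blast

lemma bounded_op_scaleC: "bounded_op T \<Longrightarrow> T (scaleC c x) = scaleC c (T x)"
  unfolding bounded_op_def by blast

lemma bounded_op_zero: "bounded_op T \<Longrightarrow> T 0 = 0"
  using bounded_op_add[of T 0 0] by simp

lemma bounded_op_diff: "bounded_op T \<Longrightarrow> T (x - y) = T x - T y"
  using bounded_op_add[of T "x - y" y] by (simp add: eq_diff_eq)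

lemma bounded_op_sum: "bounded_op T \<Longrightarrow> T (sum f A) = (\<Sum>i\<in>A. T (f i))"
  by (induction A rule: infinite_finite_induct) (auto simp: bounded_op_add bounded_op_zero)

lemma bounded_op_bound: "bounded_op T \<Longrightarrow> \<exists>K>0. \<forall>x. norm (T x) \<le> K * norm x"
proof -
  assume "bounded_op T"
  then obtain K where "\<forall>x. norm (T x) \<le> norm x * K"
    unfolding bounded_op_def by blast
  then have "\<forall>x. norm (T x) \<le> max K 1 * norm x"
    by (metis max.cobounded1 mult.commute mult_left_mono norm_ge_zero order_trans)
  then show ?thesis
    by (intro exI[of _ "max K 1"]) simp
qed

definition csubspace :: "'a::complex_inner set \<Rightarrow> bool" where
  "csubspace N \<longleftrightarrow> 0 \<in> N \<and> (\<forall>x\<in>N. \<forall>y\<in>N. x + y \<in> N) \<and> (\<forall>c. \<forall>x\<in>N. scaleC c x \<in> N)"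

lemma apollonius_identity:
  fixes u a b :: "'a::complex_inner"
  shows "(norm (a - b))\<^sup>2
    = 2 * (norm (u - a))\<^sup>2 + 2 * (norm (u - b))\<^sup>2 - 4 * (norm (u - scaleR (1/2) (a + b)))\<^sup>2"
proof -
  have "(u - a) + (u - b) = scaleR 2 (u - scaleR (1/2) (a + b))"
    by (simp add: algebra_simps scaleR_2)
  then have "(norm ((u - a) + (u - b)))\<^sup>2 = 4 * (norm (u - scaleR (1/2) (a + b)))\<^sup>2"
    by (simp add: power_mult_distrib)
  moreover have "norm ((u - a) - (u - b)) = norm (a - b)"
    by (simp add: norm_minus_commute)
  ultimately show ?thesis
    using parallelogram_law[of "u - a" "u - b"] by simp
qed

lemma Cauchy_if_power2_norm_diff_le:
  fixes s :: "nat \<Rightarrow> 'a::real_normed_vector"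
  assumes bound: "\<And>m n. (norm (s m - s n))\<^sup>2 \<le> e m + e n" and "e \<longlonglongrightarrow> 0"
  shows "Cauchy s"
proof (rule CauchyI)
  fix r :: real
  assume "r > 0"
  then have "eventually (\<lambda>n. e n < r\<^sup>2 / 2) sequentially"
    using \<open>e \<longlonglongrightarrow> 0\<close> by (intro order_tendstoD) auto
  then obtain M where M: "\<And>n. n \<ge> M \<Longrightarrow> e n < r\<^sup>2 / 2"
    by (auto simp: eventually_sequentially)
  have "norm (s m - s n) < r" if "m \<ge> M" "n \<ge> M" for m n
  proof -
    have "(norm (s m - s n))\<^sup>2 < r\<^sup>2"
      using bound[of m n] M[OF that(1)] M[OF that(2)] by linarith
    then show ?thesis
      using \<open>r > 0\<close> by (simp add: power_less_imp_less_base)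
  qed
  then show "\<exists>M. \<forall>m\<ge>M. \<forall>n\<ge>M. norm (s m - s n) < r"
    by blast
qed

lemma nearest_point_exists:
  fixes u :: "'a::chilbert_space"
  assumes "csubspace N" and "closed N"
  shows "\<exists>p\<in>N. \<forall>n\<in>N. norm (u - p) \<le> norm (u - n)"
proof -
  have N0: "0 \<in> N"
    using assms(1) unfolding csubspace_def by blast
  have Nmid: "scaleR (1/2) (x + y) \<in> N" if "x \<in> N" "y \<in> N" for x y
    using assms(1) that unfolding csubspace_def scaleR_scaleC by blast
  define D where "D = Inf ((\<lambda>n. (norm (u - n))\<^sup>2) ` N)"
  have D_le: "D \<le> (norm (u - n))\<^sup>2" if "n \<in> N" for n
    unfolding D_def using that by (intro cInf_lower bdd_belowI[of _ 0]) auto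
  have "\<exists>n\<in>N. (norm (u - n))\<^sup>2 < D + 1 / Suc k" for k
    using cInf_lessD[of "(\<lambda>n. (norm (u - n))\<^sup>2) ` N" "D + 1 / Suc k"] N0
    unfolding D_def by auto
  then obtain s where sN: "s k \<in> N" and s_lt: "(norm (u - s k))\<^sup>2 < D + 1 / Suc k" for k
    by metis
  have s_close: "(norm (s m - s n))\<^sup>2 \<le> 2 / Suc m + 2 / Suc n" for m n
  proof -
    have "D \<le> (norm (u - scaleR (1/2) (s m + s n)))\<^sup>2"
      by (rule D_le[OF Nmid[OF sN sN]])
    then show ?thesis
      using apollonius_identity[of "s m" "s n" u] s_lt[of m] s_lt[of n] by simp
  qed
  moreover have "(\<lambda>k. 2 / Suc k) \<longlonglongrightarrow> 0"
    using tendsto_mult_right_zero[OF LIMSEQ_inverse_real_of_nat, of 2] by (simp add: divide_inverse)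
  ultimately have "Cauchy s"
    by (rule Cauchy_if_power2_norm_diff_le)
  then obtain p where sp: "s \<longlonglongrightarrow> p"
    using Cauchy_convergent_iff convergent_def by blast
  have "p \<in> N"
    using assms(2) sN sp closed_sequentially by blast
  moreover have "(norm (u - p))\<^sup>2 \<le> D"
  proof (rule tendsto_le[OF sequentially_bot])
    show "(\<lambda>k. D + 1 / Suc k) \<longlonglongrightarrow> D"
      using tendsto_add[OF tendsto_const LIMSEQ_inverse_real_of_nat]
      by (simp add: inverse_eq_divide)
    show "(\<lambda>k. (norm (u - s k))\<^sup>2) \<longlonglongrightarrow> (norm (u - p))\<^sup>2"
      by (intro tendsto_intros sp)
    show "\<forall>\<^sub>F k in sequentially. (norm (u - s k))\<^sup>2 \<le> D + 1 / Suc k"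
      using s_lt by (simp add: less_imp_le)
  qed
  then have "norm (u - p) \<le> norm (u - n)" if "n \<in> N" for n
    using D_le[OF that] by (rule power2_le_imp_le[OF order_trans]) simp_all
  ultimately show ?thesis
    by blast
qed

lemma nearest_point_orthogonal:
  fixes u p :: "'a::complex_inner"
  assumes "csubspace N" and "p \<in> N" and nearest: "\<And>n. n \<in> N \<Longrightarrow> norm (u - p) \<le> norm (u - n)"
    and "n \<in> N"
  shows "cinner (u - p) n = 0"
proof (cases "n = 0")
  case False
  define c where "c = cinner (u - p) n"
  define t where "t = c / complex_of_real ((norm n)\<^sup>2)"
  have "p + scaleC t n \<in> N"
    using assms(1,2,4) unfolding csubspace_def by blast
  then have "(norm (u - p))\<^sup>2 \<le> (norm ((u - p) - scaleC t n))\<^sup>2"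
    using nearest by (simp add: diff_diff_eq power_mono)
  also have "\<dots> = (norm (u - p))\<^sup>2 + (cmod t)\<^sup>2 * (norm n)\<^sup>2 - 2 * Re (cnj t * c)"
    by (simp add: power2_norm_diff norm_scaleC cinner_scaleC_right power_mult_distrib c_def)
  also have "(cmod t)\<^sup>2 * (norm n)\<^sup>2 = (cmod c)\<^sup>2 / (norm n)\<^sup>2"
    using False by (simp add: t_def norm_divide norm_power power_divide field_simps)
  also have "cnj t * c = complex_of_real ((cmod c)\<^sup>2 / (norm n)\<^sup>2)"
    by (simp add: t_def mult.commute flip: complex_norm_square)
  finally show ?thesis
    using False by (simp add: c_def divide_le_0_iff)
qed simp

theorem riesz_representation:
  fixes \<phi> :: "'a::chilbert_space \<Rightarrow> complex"
  assumes add: "\<And>x y. \<phi> (x + y) = \<phi> x + \<phi> y" and scaleC: "\<And>c x. \<phi> (scaleC c x) = c * \<phi> x"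
    and bound: "\<And>x. cmod (\<phi> x) \<le> norm x * K"
  shows "\<exists>z. \<forall>x. \<phi> x = cinner x z"
proof (cases "\<forall>x. \<phi> x = 0")
  case False
  then obtain u where u: "\<phi> u \<noteq> 0"
    by blast
  have \<phi>_diff: "\<phi> (x - y) = \<phi> x - \<phi> y" for x y
    using add[of "x - y" y] by simp
  define N where "N = {x. \<phi> x = 0}"
  have "bounded_linear \<phi>"
    using bound
    by (intro bounded_linear_intro[of _ K])
      (auto simp: add scaleR_scaleC scaleC scaleR_conv_of_real)
  then have "closed N"
    unfolding N_def by (intro closed_Collect_eq continuous_intros linear_continuous_on)
  moreover have "csubspace N"
    unfolding csubspace_def N_def using scaleC[of 0 0] by (simp add: add scaleC)
  ultimately obtain p where "p \<in> N" and nearest: "\<forall>n\<in>N. norm (u - p) \<le> norm (u - n)"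
    using nearest_point_exists by blast
  define w where "w = u - p"
  have w_orth: "cinner w n = 0" if "n \<in> N" for n
    unfolding w_def using nearest_point_orthogonal \<open>csubspace N\<close> \<open>p \<in> N\<close> nearest that by blast
  have \<phi>w: "\<phi> w = \<phi> u"
    using \<open>p \<in> N\<close> by (simp add: w_def \<phi>_diff N_def)
  then have "cinner w w \<noteq> 0"
    using u scaleC[of 0 0] by (auto simp: cinner_self_eq_0)
  show ?thesis
  proof (intro exI allI)
    fix x
    have "x - scaleC (\<phi> x / \<phi> w) w \<in> N"
      using \<phi>w u by (simp add: N_def \<phi>_diff scaleC)
    then have "cinner (x - scaleC (\<phi> x / \<phi> w) w) w = 0"
      using w_orth by (subst cinner_commute) simp
    then have "cinner x w = (\<phi> x / \<phi> w) * cinner w w"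
      by (simp add: cinner_diff_left cinner_scaleC_left)
    then show "\<phi> x = cinner x (scaleC (cnj (\<phi> w / cinner w w)) w)"
      using \<open>cinner w w \<noteq> 0\<close> \<phi>w u by (simp add: cinner_scaleC_right field_simps)
  qed
qed (intro exI[of _ 0], simp)

definition cadjoint :: "('a::complex_inner \<Rightarrow> 'a) \<Rightarrow> 'a \<Rightarrow> 'a" where
  "cadjoint T y = (SOME z. \<forall>x. cinner (T x) y = cinner x z)"

lemma cinner_cadjoint:
  fixes T :: "'a::chilbert_space \<Rightarrow> 'a"
  assumes "bounded_op T"
  shows "cinner (T x) y = cinner x (cadjoint T y)"
proof -
  obtain K where K: "K > 0" "\<And>x. norm (T x) \<le> K * norm x"
    using bounded_op_bound[OF assms] by blast
  have "\<exists>z. \<forall>x. cinner (T x) y = cinner x z"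
  proof (rule riesz_representation[where K = "K * norm y"])
    show "cmod (cinner (T x) y) \<le> norm x * (K * norm y)" for x
      using norm_cinner_le[of "T x" y] K mult_right_mono[OF K(2)[of x] norm_ge_zero[of y]]
      by (simp add: mult_ac)
  qed (simp_all add: bounded_op_add[OF assms] bounded_op_scaleC[OF assms]
      cinner_add_left cinner_scaleC_left)
  then show ?thesis
    unfolding cadjoint_def by (rule someI_ex[where P = "\<lambda>z. \<forall>x. cinner (T x) y = cinner x z",
          THEN spec])
qed

section \<open>Compact operators\<close>

lemma power2_norm_le_cadjoint:
  fixes T :: "'a::chilbert_space \<Rightarrow> 'a"
  assumes "bounded_op T"
  shows "(norm (T x))\<^sup>2 \<le> norm (T x) * norm (T x - y) + cmod (cinner x (cadjoint T y))"
proof -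
  have "(norm (T x))\<^sup>2 = Re (cinner (T x) (T x - y)) + Re (cinner x (cadjoint T y))"
    by (simp add: power2_norm_eq_cinner cinner_diff_right cinner_cadjoint[OF assms])
  also have "\<dots> \<le> norm (T x) * norm (T x - y) + cmod (cinner x (cadjoint T y))"
    by (rule add_mono[OF order_trans[OF complex_Re_le_cmod norm_cinner_le] complex_Re_le_cmod])
  finally show ?thesis .
qed

theorem compact_op_weakly_null_tendsto:
  fixes T :: "'a::chilbert_space \<Rightarrow> 'a" and \<xi> :: "'i \<Rightarrow> 'a"
  assumes "compact_op T" and unit: "\<And>\<alpha>. norm (\<xi> \<alpha>) \<le> 1"
    and weakly_null: "\<And>\<eta>. ((\<lambda>\<alpha>. cinner (\<xi> \<alpha>) \<eta>) \<longlongrightarrow> 0) F"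
  shows "((\<lambda>\<alpha>. (norm (T (\<xi> \<alpha>)))\<^sup>2) \<longlongrightarrow> 0) F"
  unfolding tendsto_iff
proof (intro allI impI)
  fix r :: real
  assume "r > 0"
  have "bounded_op T"
    using assms(1) by (simp add: compact_op_def)
  then obtain K where K: "K > 0" "\<And>x. norm (T x) \<le> K * norm x"
    using bounded_op_bound by blast
  define e where "e = r / (K + 2)"
  have "e > 0" and "(K + 2) * e = r"
    using \<open>r > 0\<close> K(1) by (simp_all add: e_def)
  then have "K * e + e < r"
    by (simp add: algebra_simps)
  have "compact (closure (T ` {x. norm x \<le> 1}))"
    using assms(1) by (simp add: compact_op_def)
  then obtain Y where "finite Y" and Y: "closure (T ` {x. norm x \<le> 1}) \<subseteq> (\<Union>y\<in>Y. ball y e)"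
    using \<open>e > 0\<close> compact_eq_totally_bounded by metis
  \<comment> \<open>Weak nullity is tested against the finitely many vectors \<open>cadjoint T y\<close>, \<open>y \<in> Y\<close>.\<close>
  have "eventually (\<lambda>\<alpha>. \<forall>y\<in>Y. cmod (cinner (\<xi> \<alpha>) (cadjoint T y)) < e) F"
    using \<open>finite Y\<close> tendstoD[OF weakly_null \<open>e > 0\<close>] by (simp add: eventually_ball_finite)
  then show "eventually (\<lambda>\<alpha>. dist ((norm (T (\<xi> \<alpha>)))\<^sup>2) 0 < r) F"
  proof (rule eventually_mono)
    fix \<alpha>
    assume small: "\<forall>y\<in>Y. cmod (cinner (\<xi> \<alpha>) (cadjoint T y)) < e"
    have "T (\<xi> \<alpha>) \<in> closure (T ` {x. norm x \<le> 1})"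
      using unit[of \<alpha>] by (intro closure_subset[THEN subsetD]) auto
    then obtain y where "y \<in> Y" and "dist y (T (\<xi> \<alpha>)) < e"
      using Y by auto
    then have "norm (T (\<xi> \<alpha>)) * norm (T (\<xi> \<alpha>) - y) \<le> K * e"
      using K unit[of \<alpha>] order_trans[OF K(2) mult_left_le[OF unit[of \<alpha>]]]
      by (intro mult_mono) (auto simp: dist_norm norm_minus_commute)
    then have "(norm (T (\<xi> \<alpha>)))\<^sup>2 < K * e + e"
      using power2_norm_le_cadjoint[OF \<open>bounded_op T\<close>, of "\<xi> \<alpha>" y] small \<open>y \<in> Y\<close> by fastforce
    then show "dist ((norm (T (\<xi> \<alpha>)))\<^sup>2) 0 < r"
      using \<open>K * e + e < r\<close> by simp
  qed
qed

definition orthonormal :: "'a::complex_inner set \<Rightarrow> bool" where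
  "orthonormal U \<longleftrightarrow> (\<forall>u\<in>U. cinner u u = 1) \<and> (\<forall>u\<in>U. \<forall>v\<in>U. u \<noteq> v \<longrightarrow> cinner u v = 0)"

definition proj :: "'a::complex_inner set \<Rightarrow> 'a \<Rightarrow> 'a" where
  "proj U x = (\<Sum>u\<in>U. scaleC (cinner x u) u)"

lemma norm_orthonormal: "orthonormal U \<Longrightarrow> u \<in> U \<Longrightarrow> norm u = 1"
  unfolding orthonormal_def by (simp add: norm_eq_sqrt_cinner)

lemma cinner_proj_orthonormal:
  assumes "finite U" "orthonormal U" "v \<in> U"
  shows "cinner (proj U x) v = cinner x v"
proof -
  have "cinner (proj U x) v = (\<Sum>u\<in>U. cinner x u * cinner u v)"
    by (simp add: proj_def cinner_sum_left cinner_scaleC_left)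
  also have "\<dots> = (\<Sum>u\<in>U. if u = v then cinner x u else 0)"
    using assms(2,3) by (intro sum.cong) (auto simp: orthonormal_def)
  finally show ?thesis
    using assms(1,3) by simp
qed

lemma cinner_proj_residual:
  "finite U \<Longrightarrow> orthonormal U \<Longrightarrow> v \<in> U \<Longrightarrow> cinner (x - proj U x) v = 0"
  by (simp add: cinner_diff_left cinner_proj_orthonormal)

lemma cinner_proj_right_eq_0: "(\<And>u. u \<in> U \<Longrightarrow> cinner r u = 0) \<Longrightarrow> cinner r (proj U x) = 0"
  by (simp add: proj_def cinner_sum_right cinner_scaleC_right)

lemma norm_proj_residual_le:
  assumes "finite U" "orthonormal U"
  shows "norm (x - proj U x) \<le> norm x"
proof -
  have "cinner (x - proj U x) (proj U x) = 0"
    using assms by (intro cinner_proj_right_eq_0 cinner_proj_residual)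
  then have "(norm x)\<^sup>2 = (norm (x - proj U x))\<^sup>2 + (norm (proj U x))\<^sup>2"
    using pythagoras[of "x - proj U x" "proj U x"] by simp
  then have "(norm (x - proj U x))\<^sup>2 \<le> (norm x)\<^sup>2"
    by simp
  then show ?thesis
    by (rule power2_le_imp_le) simp
qed

lemma orthonormal_insert_residual:
  fixes a :: "'a::complex_inner"
  assumes "finite U" and "orthonormal U" and "a \<noteq> proj U a"
  shows "\<exists>w. w \<notin> U \<and> orthonormal (insert w U) \<and> proj (insert w U) a = a \<and>
    (\<forall>e. proj U e = e \<longrightarrow> proj (insert w U) e = e)"
proof -
  define a' where "a' = a - proj U a"
  define w where "w = scaleC (complex_of_real (1 / norm a')) a'"
  have "a' \<noteq> 0"
    using assms(3) by (simp add: a'_def)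
  have w_orth: "cinner w u = 0" if "u \<in> U" for u
    using cinner_proj_residual[OF assms(1,2) that] by (simp add: w_def a'_def cinner_scaleC_left)
  have w_orth': "cinner u w = 0" if "u \<in> U" for u
    using w_orth[OF that] by (subst cinner_commute) simp
  have "cinner w w = 1"
    using \<open>a' \<noteq> 0\<close> by (simp add: cinner_self_eq_power2_norm w_def norm_scaleC norm_divide)
  then have "w \<notin> U" and "orthonormal (insert w U)"
    using assms(2) w_orth w_orth' by (force, auto simp: orthonormal_def)
  then have proj_insert: "proj (insert w U) x = scaleC (cinner x w) w + proj U x" for x
    using assms(1) by (simp add: proj_def)
  have "cinner w (proj U a) = 0"
    using w_orth by (rule cinner_proj_right_eq_0)
  then have "cinner a w = cinner a' w"
    by (subst (asm) cinner_commute) (simp add: a'_def cinner_diff_left)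
  also have "\<dots> = complex_of_real (norm a')"
    by (simp add: w_def cinner_scaleC_right cinner_self_eq_power2_norm power2_eq_square)
  finally have "scaleC (cinner a w) w = a'"
    using \<open>a' \<noteq> 0\<close> by (simp add: w_def scaleC_scaleC)
  then have "proj (insert w U) a = a"
    by (simp add: proj_insert a'_def)
  moreover have "proj (insert w U) e = e" if "proj U e = e" for e
  proof -
    have "cinner w e = 0"
      using cinner_proj_right_eq_0[of U w e] w_orth that by simp
    then have "cinner e w = 0"
      by (subst cinner_commute) simp
    then show ?thesis
      using that by (simp add: proj_insert)
  qed
  ultimately show ?thesis
    using \<open>w \<notin> U\<close> \<open>orthonormal (insert w U)\<close> by blast
qed

lemma gram_schmidt:
  fixes E :: "'a::complex_inner set"
  assumes "finite E"
  shows "\<exists>U. finite U \<and> orthonormal U \<and> (\<forall>e\<in>E. proj U e = e)"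
  using assms
proof (induction E rule: finite_induct)
  case empty
  show ?case
    by (intro exI[of _ "{}"]) (simp add: orthonormal_def)
next
  case (insert a E)
  then obtain U where U: "finite U" "orthonormal U" "\<forall>e\<in>E. proj U e = e"
    by blast
  show ?case
  proof (cases "proj U a = a")
    case False
    with U obtain w where "orthonormal (insert w U)" "proj (insert w U) a = a"
      "\<forall>e\<in>E. proj (insert w U) e = e"
      using orthonormal_insert_residual[OF U(1,2)] by metis
    then show ?thesis
      using U(1) by (intro exI[of _ "insert w U"]) auto
  qed (use U in auto)
qed

lemma bounded_combinations_in_compact:
  fixes f :: "'b \<Rightarrow> 'a::complex_inner"
  assumes "finite U"
  shows "\<exists>C. compact C \<and> (\<forall>c. (\<forall>u\<in>U. cmod (c u) \<le> 1) \<longrightarrow> (\<Sum>u\<in>U. scaleC (c u) (f u)) \<in> C)"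
  using assms
proof (induction U rule: finite_induct)
  case empty
  show ?case by (intro exI[of _ "{0}"]) auto
next
  case (insert w U)
  then obtain C where C: "compact C"
    "\<forall>c. (\<forall>u\<in>U. cmod (c u) \<le> 1) \<longrightarrow> (\<Sum>u\<in>U. scaleC (c u) (f u)) \<in> C"
    by blast
  define C' where "C' = (\<lambda>p. fst p + scaleC (snd p) (f w)) ` (C \<times> cball 0 1)"
  have "compact C'"
    unfolding C'_def
    by (rule compact_continuous_image[OF _ compact_Times[OF C(1) compact_cball]])
      (intro continuous_intros)
  moreover have "(\<Sum>u\<in>insert w U. scaleC (c u) (f u)) \<in> C'" if "\<forall>u\<in>insert w U. cmod (c u) \<le> 1" for c
  proof -
    have "((\<Sum>u\<in>U. scaleC (c u) (f u)), c w) \<in> C \<times> cball 0 1"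
      using C(2) that by auto
    then show ?thesis
      unfolding C'_def using insert(1,2)
      by (auto intro!: image_eqI[of _ _ "((\<Sum>u\<in>U. scaleC (c u) (f u)), c w)"] simp: add.commute)
  qed
  ultimately show ?case
    by blast
qed

definition small_on_finite_codim :: "('a::complex_inner \<Rightarrow> 'a) \<Rightarrow> real \<Rightarrow> bool" where
  "small_on_finite_codim T \<epsilon> \<longleftrightarrow>
     (\<exists>E. finite E \<and> (\<forall>x. norm x = 1 \<longrightarrow> (\<forall>e\<in>E. cinner x e = 0) \<longrightarrow> norm (T x) \<le> \<epsilon>))"

lemma norm_le_of_orthogonal:
  fixes T :: "'a::complex_inner \<Rightarrow> 'a"
  assumes "bounded_op T" and "\<epsilon> \<ge> 0"
    and small: "\<forall>x. norm x = 1 \<longrightarrow> (\<forall>e\<in>E. cinner x e = 0) \<longrightarrow> norm (T x) \<le> \<epsilon>"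
    and orth: "\<forall>e\<in>E. cinner x e = 0"
  shows "norm (T x) \<le> \<epsilon> * norm x"
proof (cases "x = 0")
  case False
  define x' where "x' = scaleC (complex_of_real (1 / norm x)) x"
  have "norm x' = 1" and "\<forall>e\<in>E. cinner x' e = 0"
    using False orth by (simp_all add: x'_def norm_scaleC norm_divide cinner_scaleC_left)
  then have "norm (T x') \<le> \<epsilon>"
    using small by blast
  moreover have "norm (T x') = norm (T x) / norm x"
    using False by (simp add: x'_def bounded_op_scaleC[OF assms(1)] norm_scaleC norm_divide)
  ultimately show ?thesis
    using False by (simp add: divide_le_eq)
qed (simp add: bounded_op_zero[OF assms(1)])

lemma small_on_finite_codim_compact_approx:
  fixes T :: "'a::complex_inner \<Rightarrow> 'a"
  assumes "bounded_op T" and "small_on_finite_codim T \<epsilon>" and "\<epsilon> \<ge> 0"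
  shows "\<exists>C. compact C \<and> (\<forall>x. norm x \<le> 1 \<longrightarrow> (\<exists>y\<in>C. norm (T x - y) \<le> \<epsilon>))"
proof -
  obtain E where "finite E"
    and E: "\<forall>x. norm x = 1 \<longrightarrow> (\<forall>e\<in>E. cinner x e = 0) \<longrightarrow> norm (T x) \<le> \<epsilon>"
    using assms(2) by (auto simp: small_on_finite_codim_def)
  obtain U where U: "finite U" "orthonormal U" "\<forall>e\<in>E. proj U e = e"
    using gram_schmidt[OF \<open>finite E\<close>] by blast
  obtain C where "compact C"
    and C: "\<forall>c. (\<forall>u\<in>U. cmod (c u) \<le> 1) \<longrightarrow> (\<Sum>u\<in>U. scaleC (c u) (T u)) \<in> C"
    using bounded_combinations_in_compact[OF U(1)] by blast
  have "T (proj U x) \<in> C \<and> norm (T x - T (proj U x)) \<le> \<epsilon>" if "norm x \<le> 1" for x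
  proof
    have "cmod (cinner x u) \<le> 1" if "u \<in> U" for u
      using norm_cinner_le[of x u] norm_orthonormal[OF U(2) that] \<open>norm x \<le> 1\<close> by simp
    then show "T (proj U x) \<in> C"
      using C by (simp add: proj_def bounded_op_sum[OF assms(1)] bounded_op_scaleC[OF assms(1)])
    have "cinner (x - proj U x) (proj U e) = 0" for e
      using U(1,2) by (intro cinner_proj_right_eq_0 cinner_proj_residual)
    then have "\<forall>e\<in>E. cinner (x - proj U x) e = 0"
      using U(3) by metis
    then have "norm (T (x - proj U x)) \<le> \<epsilon> * norm (x - proj U x)"
      using norm_le_of_orthogonal[OF assms(1,3) E] by blast
    also have "\<dots> \<le> \<epsilon>"
      using norm_proj_residual_le[OF U(1,2), of x] \<open>norm x \<le> 1\<close> \<open>\<epsilon> \<ge> 0\<close>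
      by (simp add: mult_left_le)
    finally show "norm (T x - T (proj U x)) \<le> \<epsilon>"
      by (simp add: bounded_op_diff[OF assms(1)])
  qed
  then show ?thesis
    using \<open>compact C\<close> by blast
qed

theorem compact_opI:
  fixes T :: "'a::chilbert_space \<Rightarrow> 'a"
  assumes "bounded_op T" and small: "\<And>\<epsilon>. \<epsilon> > 0 \<Longrightarrow> small_on_finite_codim T \<epsilon>"
  shows "compact_op T"
proof -
  define S where "S = closure (T ` {x. norm x \<le> 1})"
  have "\<exists>Y. finite Y \<and> S \<subseteq> (\<Union>y\<in>Y. ball y \<epsilon>)" if "\<epsilon> > 0" for \<epsilon>
  proof -
    have "\<epsilon> / 3 > 0"
      using \<open>\<epsilon> > 0\<close> by simp
    obtain C where "compact C" and C: "\<forall>x. norm x \<le> 1 \<longrightarrow> (\<exists>y\<in>C. norm (T x - y) \<le> \<epsilon> / 3)"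
      using small_on_finite_codim_compact_approx[OF assms(1) small less_imp_le] \<open>\<epsilon> / 3 > 0\<close>
      by blast
    obtain Y where "finite Y" and Y: "C \<subseteq> (\<Union>y\<in>Y. ball y (\<epsilon> / 3))"
      using \<open>compact C\<close> compact_eq_totally_bounded \<open>\<epsilon> / 3 > 0\<close> by blast
    have "z \<in> (\<Union>y\<in>Y. ball y \<epsilon>)" if "z \<in> S" for z
    proof -
      have "\<exists>y\<in>T ` {x. norm x \<le> 1}. dist y z < \<epsilon> / 3"
        using \<open>z \<in> S\<close> \<open>\<epsilon> / 3 > 0\<close> unfolding S_def closure_approachable by blast
      then obtain x where "norm x \<le> 1" and x: "dist (T x) z < \<epsilon> / 3"
        by auto
      then obtain y' where "y' \<in> C" and y': "dist (T x) y' \<le> \<epsilon> / 3"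
        using C by (auto simp: dist_norm)
      then obtain y where "y \<in> Y" and y: "dist y y' < \<epsilon> / 3"
        using Y by auto
      have "dist y z < \<epsilon>"
        using dist_triangle[of y z y'] dist_triangle[of y' z "T x"] dist_commute[of y' "T x"] x y y'
        by linarith
      then show ?thesis
        using \<open>y \<in> Y\<close> by auto
    qed
    then show ?thesis
      using \<open>finite Y\<close> by blast
  qed
  moreover have "complete S"
    by (simp add: S_def complete_eq_closed)
  ultimately have "compact S"
    using compact_eq_totally_bounded by blast
  then show ?thesis
    using assms(1) by (simp add: compact_op_def S_def)
qed

section \<open>Linear combinations of the operators \<open>b\<^sub>j\<close>\<close>

definition lin_comb_op :: "nat \<Rightarrow> (nat \<Rightarrow> complex) \<Rightarrow> (nat \<Rightarrow> 'a::complex_inner \<Rightarrow> 'a) \<Rightarrow> 'a \<Rightarrow> 'a" where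
  "lin_comb_op l c b x = (\<Sum>j<l. scaleC (c j) (b j x))"

definition l1_norm :: "nat \<Rightarrow> (nat \<Rightarrow> complex) \<Rightarrow> real" where
  "l1_norm l v = (\<Sum>i<l. cmod (v i))"

lemma lin_indep_mod_compact_iff:
  "lin_indep_mod_compact l b \<longleftrightarrow> (\<forall>c. compact_op (lin_comb_op l c b) \<longrightarrow> (\<forall>j<l. c j = 0))"
  by (simp add: lin_indep_mod_compact_def lin_comb_op_def[abs_def])

lemma l1_norm_nonneg: "l1_norm l v \<ge> 0"
  by (simp add: l1_norm_def sum_nonneg)

lemma norm_le_l1_norm: "i < l \<Longrightarrow> cmod (v i) \<le> l1_norm l v"
  unfolding l1_norm_def by (rule member_le_sum) auto

lemma l1_norm_pos_iff: "l1_norm l v > 0 \<longleftrightarrow> (\<exists>i<l. v i \<noteq> 0)"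
  using l1_norm_nonneg[of l v] by (auto simp: l1_norm_def sum_nonneg_eq_0_iff order_less_le)

lemma l1_norm_mult: "l1_norm l (\<lambda>i. a * v i) = cmod a * l1_norm l v"
  by (simp add: l1_norm_def norm_mult sum_distrib_left)

lemma l1_norm_diff_commute: "l1_norm l (\<lambda>i. v i - w i) = l1_norm l (\<lambda>i. w i - v i)"
  by (simp add: l1_norm_def norm_minus_commute)

lemma l1_norm_triangle: "l1_norm l v \<le> l1_norm l w + l1_norm l (\<lambda>i. v i - w i)"
  unfolding l1_norm_def sum.distrib[symmetric]
  by (rule sum_mono) (metis add.commute diff_add_cancel norm_triangle_ineq)

lemma l1_norm_unit_vector: "i < l \<Longrightarrow> l1_norm l (\<lambda>j. if j = i then 1 else 0) = 1"
  by (simp add: l1_norm_def if_distrib[of cmod] sum.delta cong: if_cong)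

lemma lin_comb_op_mult: "lin_comb_op l (\<lambda>i. a * v i) b x = scaleC a (lin_comb_op l v b x)"
  by (simp add: lin_comb_op_def scaleC_sum_right scaleC_scaleC)

lemma lin_comb_op_diff:
  "lin_comb_op l v b x - lin_comb_op l w b x = lin_comb_op l (\<lambda>i. v i - w i) b x"
  by (simp add: lin_comb_op_def scaleC_diff_left sum_subtractf)

lemma bounded_ops_uniform_bound:
  fixes b :: "nat \<Rightarrow> 'a::complex_inner \<Rightarrow> 'a"
  assumes "\<forall>j<l. bounded_op (b j)"
  obtains C where "C > 0" and "\<forall>j<l. \<forall>x. norm (b j x) \<le> C * norm x"
proof -
  have "\<forall>j\<in>{..<l}. \<exists>K>0. \<forall>x. norm (b j x) \<le> K * norm x"
    using assms bounded_op_bound by blast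
  then obtain K where K: "\<forall>j\<in>{..<l}. K j > 0 \<and> (\<forall>x. norm (b j x) \<le> K j * norm x)"
    by (auto dest!: bchoice)
  have "norm (b j x) \<le> (1 + (\<Sum>i<l. K i)) * norm x" if "j < l" for j x
  proof -
    have "K j \<le> (\<Sum>i<l. K i)"
      using K that by (intro member_le_sum) (auto intro: less_imp_le)
    then have "K j \<le> 1 + (\<Sum>i<l. K i)"
      by linarith
    then show ?thesis
      using K that by (meson lessThan_iff mult_right_mono norm_ge_zero order_trans)
  qed
  moreover have "1 + (\<Sum>i<l. K i) > 0"
    using K by (intro add_pos_nonneg sum_nonneg) (auto intro: less_imp_le)
  ultimately show thesis
    using that by blast
qed

lemma norm_lin_comb_op_le:
  assumes "\<forall>j<l. \<forall>x. norm (b j x) \<le> C * norm x"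
  shows "norm (lin_comb_op l v b x) \<le> C * l1_norm l v * norm x"
proof -
  have "norm (lin_comb_op l v b x) \<le> (\<Sum>j<l. cmod (v j) * (C * norm x))"
    unfolding lin_comb_op_def
    by (intro order_trans[OF norm_sum] sum_mono) (simp add: norm_scaleC assms mult_left_mono)
  also have "\<dots> = C * l1_norm l v * norm x"
    by (simp add: l1_norm_def sum_distrib_left sum_distrib_right mult_ac)
  finally show ?thesis .
qed

lemma bounded_op_lin_comb_op:
  assumes "\<forall>j<l. bounded_op (b j)"
  shows "bounded_op (lin_comb_op l c b)"
  unfolding bounded_op_def
proof (intro conjI allI)
  show "lin_comb_op l c b (x + y) = lin_comb_op l c b x + lin_comb_op l c b y" for x y
    using assms by (simp add: lin_comb_op_def bounded_op_add scaleC_add_right sum.distrib)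
  show "lin_comb_op l c b (scaleC a x) = scaleC a (lin_comb_op l c b x)" for a x
    using assms
    by (simp add: lin_comb_op_def bounded_op_scaleC scaleC_sum_right scaleC_scaleC mult.commute)
  obtain C where "\<forall>j<l. \<forall>x. norm (b j x) \<le> C * norm x"
    using bounded_ops_uniform_bound[OF assms] by blast
  then show "\<exists>K. \<forall>x. norm (lin_comb_op l c b x) \<le> norm x * K"
    using norm_lin_comb_op_le by (metis mult.commute)
qed

lemma norm_lin_comb_op_perturb:
  assumes "\<forall>j<l. \<forall>x. norm (b j x) \<le> C * norm x"
  shows "norm (lin_comb_op l v b x)
    \<le> norm (lin_comb_op l w b x) + C * l1_norm l (\<lambda>i. v i - w i) * norm x"
proof -
  have "norm (lin_comb_op l (\<lambda>i. v i - w i) b x) \<le> C * l1_norm l (\<lambda>i. v i - w i) * norm x"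
    by (rule norm_lin_comb_op_le[OF assms])
  then show ?thesis
    using norm_triangle_ineq2[of "lin_comb_op l v b x" "lin_comb_op l w b x"]
    by (simp add: lin_comb_op_diff)
qed

section \<open>Lower bounds off finite sets\<close>

lemma bounded_seq_convergent_coordinates_subseq:
  fixes f :: "nat \<Rightarrow> nat \<Rightarrow> complex"
  assumes "\<And>k i. i < n \<Longrightarrow> cmod (f k i) \<le> B"
  shows "\<exists>r u. strict_mono r \<and> (\<forall>i<n. (\<lambda>k. f (r k) i) \<longlonglongrightarrow> u i)"
  using assms
proof (induction n)
  case 0
  show ?case
    by (intro exI[of _ id]) (auto simp: strict_mono_def)
next
  case (Suc n)
  then obtain r u where r: "strict_mono r" and u: "\<forall>i<n. (\<lambda>k. f (r k) i) \<longlonglongrightarrow> u i"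
    by auto
  have "bounded (range (\<lambda>k. f (r k) n))"
    unfolding bounded_iff using Suc.prems by auto
  then obtain a s where s: "strict_mono s" and a: "((\<lambda>k. f (r k) n) \<circ> s) \<longlonglongrightarrow> a"
    using bounded_imp_convergent_subsequence by blast
  have "(\<lambda>k. f ((r \<circ> s) k) i) \<longlonglongrightarrow> (u(n := a)) i" if "i < Suc n" for i
  proof (cases "i = n")
    case False
    with that have "i < n"
      by simp
    then have "((\<lambda>k. f (r k) i) \<circ> s) \<longlonglongrightarrow> u i"
      using u s LIMSEQ_subseq_LIMSEQ by blast
    then show ?thesis
      using False by (simp add: o_def)
  qed (use a in \<open>simp add: o_def\<close>)
  moreover have "strict_mono (r \<circ> s)"
    using r s strict_mono_o by blast
  ultimately show ?case
    by blast
qed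

lemma small_on_finite_codim_mono:
  "small_on_finite_codim T \<epsilon> \<Longrightarrow> \<epsilon> \<le> \<epsilon>' \<Longrightarrow> small_on_finite_codim T \<epsilon>'"
  unfolding small_on_finite_codim_def by (meson order_trans)

lemma small_on_finite_codim_perturb:
  assumes C: "\<forall>j<l. \<forall>x. norm (b j x) \<le> C * norm x"
    and "small_on_finite_codim (lin_comb_op l w b) \<epsilon>"
  shows "small_on_finite_codim (lin_comb_op l v b) (\<epsilon> + C * l1_norm l (\<lambda>i. v i - w i))"
proof -
  obtain E where "finite E"
    and E: "\<forall>x. norm x = 1 \<longrightarrow> (\<forall>e\<in>E. cinner x e = 0) \<longrightarrow> norm (lin_comb_op l w b x) \<le> \<epsilon>"
    using assms(2) by (auto simp: small_on_finite_codim_def)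
  have "norm (lin_comb_op l v b x) \<le> \<epsilon> + C * l1_norm l (\<lambda>i. v i - w i)"
    if "norm x = 1" "\<forall>e\<in>E. cinner x e = 0" for x
  proof -
    have "norm (lin_comb_op l v b x)
        \<le> norm (lin_comb_op l w b x) + C * l1_norm l (\<lambda>i. v i - w i) * norm x"
      by (rule norm_lin_comb_op_perturb[OF C])
    moreover have "norm (lin_comb_op l w b x) \<le> \<epsilon>"
      using E that by blast
    ultimately show ?thesis
      using that(1) by simp
  qed
  then show ?thesis
    unfolding small_on_finite_codim_def using \<open>finite E\<close> by blast
qed

lemma compact_lin_comb_op_of_limit:
  fixes b :: "nat \<Rightarrow> 'a::chilbert_space \<Rightarrow> 'a"
  assumes "\<forall>j<l. bounded_op (b j)" and C: "\<forall>j<l. \<forall>x. norm (b j x) \<le> C * norm x"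
    and small: "\<And>k. small_on_finite_codim (lin_comb_op l (u k) b) (\<epsilon> k)"
    and "\<epsilon> \<longlonglongrightarrow> 0" and lim: "\<forall>i<l. (\<lambda>k. u k i) \<longlonglongrightarrow> v i"
  shows "compact_op (lin_comb_op l v b)"
proof (rule compact_opI[OF bounded_op_lin_comb_op[OF assms(1)]])
  fix \<eta> :: real
  assume "\<eta> > 0"
  have "(\<lambda>k. l1_norm l (\<lambda>i. v i - u k i)) \<longlonglongrightarrow> l1_norm l (\<lambda>i. v i - v i)"
    unfolding l1_norm_def using lim by (intro tendsto_intros) auto
  then have "(\<lambda>k. \<epsilon> k + C * l1_norm l (\<lambda>i. v i - u k i)) \<longlonglongrightarrow> 0"
    using \<open>\<epsilon> \<longlonglongrightarrow> 0\<close> tendsto_add tendsto_mult_right_zero by (fastforce simp: l1_norm_def)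
  then have "eventually (\<lambda>k. \<epsilon> k + C * l1_norm l (\<lambda>i. v i - u k i) < \<eta>) sequentially"
    using \<open>\<eta> > 0\<close> by (rule order_tendstoD)
  then obtain k where "\<epsilon> k + C * l1_norm l (\<lambda>i. v i - u k i) < \<eta>"
    by (auto simp: eventually_sequentially)
  then show "small_on_finite_codim (lin_comb_op l v b) \<eta>"
    using small_on_finite_codim_perturb[OF C small] small_on_finite_codim_mono less_imp_le by blast
qed

lemma small_l1_unit_combination:
  assumes "l \<ge> 1" and "finite E"
    and small: "\<forall>x. norm x = 1 \<longrightarrow> (\<forall>e\<in>E. cinner x e = 0) \<longrightarrow>
      norm (lin_comb_op l v b x) < \<delta> * l1_norm l v"
  shows "\<exists>u. l1_norm l u = 1 \<and> small_on_finite_codim (lin_comb_op l u b) \<delta>"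
proof (cases "l1_norm l v > 0")
  case True
  define u where "u = (\<lambda>i. inverse (complex_of_real (l1_norm l v)) * v i)"
  have "lin_comb_op l u b x = scaleC (inverse (complex_of_real (l1_norm l v))) (lin_comb_op l v b x)"
    for x
    by (simp add: u_def lin_comb_op_mult)
  then have "norm (lin_comb_op l u b x) = norm (lin_comb_op l v b x) / l1_norm l v" for x
    using True by (simp add: norm_scaleC norm_inverse divide_inverse)
  then have "small_on_finite_codim (lin_comb_op l u b) \<delta>"
    unfolding small_on_finite_codim_def using True small \<open>finite E\<close>
    by (metis divide_le_eq less_imp_le mult.commute)
  moreover have "l1_norm l u = 1"
    using True l1_norm_mult[of l "inverse (complex_of_real (l1_norm l v))" v]
    by (simp add: u_def norm_inverse)
  ultimately show ?thesis
    by blast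
next
  case False
  \<comment> \<open>then no unit vector is orthogonal to \<open>E\<close>, so every operator is small on \<open>E\<^sup>\<bottom>\<close>\<close>
  then have "\<forall>x. norm x = 1 \<longrightarrow> (\<forall>e\<in>E. cinner x e = 0) \<longrightarrow> False"
    using small l1_norm_nonneg[of l v] by (metis mult_zero_right norm_not_less_zero order_less_le)
  then have "small_on_finite_codim (lin_comb_op l (\<lambda>j. if j = 0 then 1 else 0) b) \<delta>"
    unfolding small_on_finite_codim_def using \<open>finite E\<close> by blast
  then show ?thesis
    using l1_norm_unit_vector[of 0 l] \<open>l \<ge> 1\<close> by auto
qed

theorem essential_lower_bound:
  fixes b :: "nat \<Rightarrow> 'a::chilbert_space \<Rightarrow> 'a"
  assumes "l \<ge> 1" and bounded: "\<forall>j<l. bounded_op (b j)" and "lin_indep_mod_compact l b"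
  shows "\<exists>\<delta>>0. \<forall>v E. finite E \<longrightarrow>
    (\<exists>x. norm x = 1 \<and> (\<forall>e\<in>E. cinner x e = 0) \<and> \<delta> * l1_norm l v \<le> norm (lin_comb_op l v b x))"
proof (rule ccontr)
  assume contra: "\<not> ?thesis"
  have "\<exists>u. l1_norm l u = 1 \<and> small_on_finite_codim (lin_comb_op l u b) (1 / Suc k)" for k
  proof -
    obtain v E where "finite E" and "\<forall>x. norm x = 1 \<longrightarrow> (\<forall>e\<in>E. cinner x e = 0) \<longrightarrow>
        norm (lin_comb_op l v b x) < 1 / Suc k * l1_norm l v"
      using contra by (meson not_le of_nat_0_less_iff zero_less_Suc zero_less_divide_1_iff)
    then show ?thesis
      by (rule small_l1_unit_combination[OF \<open>l \<ge> 1\<close>])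
  qed
  then obtain u where u1: "\<And>k. l1_norm l (u k) = 1"
    and small: "\<And>k. small_on_finite_codim (lin_comb_op l (u k) b) (1 / Suc k)"
    by metis
  obtain r v where "strict_mono r" and lim: "\<forall>i<l. (\<lambda>k. u (r k) i) \<longlonglongrightarrow> v i"
    using bounded_seq_convergent_coordinates_subseq[of l u 1] norm_le_l1_norm u1 by metis
  obtain C where C: "\<forall>j<l. \<forall>x. norm (b j x) \<le> C * norm x"
    using bounded_ops_uniform_bound[OF bounded] by blast
  have "(\<lambda>k. 1 / Suc (r k)) \<longlonglongrightarrow> 0"
    using LIMSEQ_subseq_LIMSEQ[OF LIMSEQ_inverse_real_of_nat \<open>strict_mono r\<close>]
    by (simp add: o_def inverse_eq_divide)
  then have "compact_op (lin_comb_op l v b)"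
    using compact_lin_comb_op_of_limit[where u = "\<lambda>k. u (r k)" and \<epsilon> = "\<lambda>k. 1 / Suc (r k)",
        OF bounded C small _ lim] by blast
  then have "\<forall>j<l. v j = 0"
    using assms(3) lin_indep_mod_compact_iff by blast
  then have "l1_norm l v = 0"
    by (simp add: l1_norm_def)
  moreover have "(\<lambda>k. l1_norm l (u (r k))) \<longlonglongrightarrow> l1_norm l v"
    unfolding l1_norm_def using lim by (intro tendsto_intros) auto
  ultimately show False
    using u1 LIMSEQ_unique[OF tendsto_const] by fastforce
qed

lemma l1_sphere_finite_net:
  assumes "\<rho> > 0"
  shows "\<exists>V. finite V \<and> (\<forall>v. l1_norm l v = 1 \<longrightarrow> (\<exists>w\<in>V. l1_norm l (\<lambda>i. v i - w i) \<le> \<rho>))"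
proof -
  define \<rho>' where "\<rho>' = \<rho> / (l + 1)"
  have "\<rho>' > 0"
    using assms by (simp add: \<rho>'_def)
  then obtain G where "finite G" and G: "cball (0::complex) 1 \<subseteq> (\<Union>g\<in>G. ball g \<rho>')"
    using compact_eq_totally_bounded[of "cball (0::complex) 1"] by auto
  define V where "V = {w. \<forall>i. (i \<in> {..<l} \<longrightarrow> w i \<in> G) \<and> (i \<notin> {..<l} \<longrightarrow> w i = 0)}"
  have "finite V"
    unfolding V_def using \<open>finite G\<close> by (intro finite_set_of_finite_funs) auto
  moreover have "\<exists>w\<in>V. l1_norm l (\<lambda>i. v i - w i) \<le> \<rho>" if "l1_norm l v = 1" for v
  proof -
    have "\<forall>i\<in>{..<l}. \<exists>g\<in>G. cmod (v i - g) < \<rho>'"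
      using G norm_le_l1_norm[of _ l v] that
      by (fastforce simp: subset_eq dist_norm norm_minus_commute)
    then obtain g where g: "\<forall>i\<in>{..<l}. g i \<in> G \<and> cmod (v i - g i) < \<rho>'"
      by metis
    define w where "w i = (if i < l then g i else 0)" for i
    have "w \<in> V"
      using g by (simp add: V_def w_def)
    moreover have "l1_norm l (\<lambda>i. v i - w i) = (\<Sum>i<l. cmod (v i - g i))"
      by (simp add: l1_norm_def w_def)
    moreover have "(\<Sum>i<l. cmod (v i - g i)) \<le> (\<Sum>i<l. \<rho>')"
      using g by (intro sum_mono) (simp add: less_imp_le)
    moreover have "(\<Sum>i<l. \<rho>') \<le> \<rho>"
      using assms by (simp add: \<rho>'_def field_simps)
    ultimately show ?thesis
      by force
  qed
  ultimately show ?thesis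
    by blast
qed

lemma bounded_op_id: "bounded_op (\<lambda>x. x)"
  unfolding bounded_op_def by (intro conjI exI[of _ 1]) auto

lemma orthogonal_family_off_finite:
  fixes B :: "('a::chilbert_space \<Rightarrow> 'a) set"
  assumes "finite B" and bounded: "\<forall>T\<in>B. bounded_op T" and "finite V"
    and avail: "\<forall>w\<in>V. \<forall>E. finite E \<longrightarrow> (\<exists>x. (\<forall>e\<in>E. cinner x e = 0) \<and> P w x)"
  shows "\<exists>x. (\<forall>w\<in>V. P w (x w)) \<and>
    (\<forall>w\<in>V. \<forall>w'\<in>V. w \<noteq> w' \<longrightarrow> (\<forall>S\<in>B. \<forall>T\<in>B. cinner (S (x w)) (T (x w')) = 0))"
  using \<open>finite V\<close> avail
proof (induction V rule: finite_induct)
  case (insert a V)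
  then obtain x where P: "\<forall>w\<in>V. P w (x w)"
    and orth: "\<forall>w\<in>V. \<forall>w'\<in>V. w \<noteq> w' \<longrightarrow> (\<forall>S\<in>B. \<forall>T\<in>B. cinner (S (x w)) (T (x w')) = 0)"
    by auto
  \<comment> \<open>the new vector is chosen orthogonal to all \<open>S\<^sup>* (T (x w))\<close>\<close>
  define E where "E = (\<lambda>(S, T, w). cadjoint S (T (x w))) ` (B \<times> B \<times> V)"
  have "finite E"
    using \<open>finite B\<close> \<open>finite V\<close> by (simp add: E_def)
  then obtain y where y: "\<forall>e\<in>E. cinner y e = 0" and "P a y"
    using insert.prems by blast
  have new: "cinner (S y) (T (x w)) = 0" if "S \<in> B" "T \<in> B" "w \<in> V" for S T w
    using y that bounded by (auto simp: E_def cinner_cadjoint)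
  have "cinner (S (x w)) (T y) = 0" if "S \<in> B" "T \<in> B" "w \<in> V" for S T w
    using new[OF that(2,1,3)] by (subst cinner_commute) simp
  then show ?case
    using P orth new \<open>P a y\<close> \<open>a \<notin> V\<close> by (intro exI[of _ "x(a := y)"]) auto
qed simp

lemma power2_norm_orthogonal_average:
  fixes T :: "'a::complex_inner \<Rightarrow> 'a"
  assumes "bounded_op T" and "finite V"
    and orth: "\<And>w w'. w \<in> V \<Longrightarrow> w' \<in> V \<Longrightarrow> w \<noteq> w' \<Longrightarrow> cinner (T (x w)) (T (x w')) = 0"
  shows "(norm (T (scaleC (complex_of_real (1 / sqrt (card V))) (\<Sum>w\<in>V. x w))))\<^sup>2
    = (\<Sum>w\<in>V. (norm (T (x w)))\<^sup>2) / card V"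
proof -
  have "(norm (\<Sum>w\<in>V. T (x w)))\<^sup>2 = (\<Sum>w\<in>V. (norm (T (x w)))\<^sup>2)"
    using assms(2) orth by (rule power2_norm_sum_orthogonal)
  then show ?thesis
    by (simp add: bounded_op_scaleC[OF assms(1)] bounded_op_sum[OF assms(1)] norm_scaleC
        norm_divide power_mult_distrib power_divide)
qed

lemma cinner_lin_comb_op_eq_0:
  "(\<And>i j. i < l \<Longrightarrow> j < l \<Longrightarrow> cinner (b i x) (b j y) = 0) \<Longrightarrow>
    cinner (lin_comb_op l v b x) (lin_comb_op l v b y) = 0"
  by (simp add: lin_comb_op_def cinner_sum_left cinner_sum_right cinner_scaleC_left
      cinner_scaleC_right)

lemma lin_comb_op_lower_bound_homogeneous:
  assumes "\<And>u. l1_norm l u = 1 \<Longrightarrow> \<gamma> \<le> (norm (lin_comb_op l u b \<xi>))\<^sup>2"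
  shows "\<gamma> * (l1_norm l v)\<^sup>2 \<le> (norm (lin_comb_op l v b \<xi>))\<^sup>2"
proof (cases "l1_norm l v > 0")
  case True
  define n where "n = l1_norm l v"
  have "\<gamma> \<le> (norm (lin_comb_op l (\<lambda>i. inverse (complex_of_real n) * v i) b \<xi>))\<^sup>2"
    using assms l1_norm_mult[of l "inverse (complex_of_real n)" v] True
    by (simp add: n_def norm_inverse)
  also have "\<dots> = (norm (lin_comb_op l v b \<xi>))\<^sup>2 / n\<^sup>2"
    using True by (simp add: n_def lin_comb_op_mult norm_scaleC norm_inverse power_mult_distrib
        divide_inverse power_inverse)
  finally show ?thesis
    using True by (simp add: n_def pos_le_divide_eq)
next
  case False
  then show ?thesis
    using l1_norm_nonneg[of l v] by simp
qed

lemma lower_bound_near_net_point: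
  assumes C: "\<forall>j<l. \<forall>x. norm (b j x) \<le> C * norm x" and "C \<ge> 0" and "\<delta> \<ge> 0"
    and \<rho>: "(\<delta> + C) * \<rho> \<le> \<delta> / 2"
    and v: "l1_norm l v = 1" and near: "l1_norm l (\<lambda>i. v i - w i) \<le> \<rho>"
    and "norm x = 1" and w: "\<delta> * l1_norm l w \<le> norm (lin_comb_op l w b x)"
  shows "\<delta> / 2 \<le> norm (lin_comb_op l v b x)"
proof -
  have "1 - \<rho> \<le> l1_norm l w"
    using l1_norm_triangle[of l v w] v near by simp
  then have "\<delta> * (1 - \<rho>) \<le> norm (lin_comb_op l w b x)"
    using w \<open>\<delta> \<ge> 0\<close> by (meson mult_left_mono order_trans)
  also have "\<dots> \<le> norm (lin_comb_op l v b x) + C * l1_norm l (\<lambda>i. w i - v i) * norm x"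
    by (rule norm_lin_comb_op_perturb[OF C])
  also have "\<dots> \<le> norm (lin_comb_op l v b x) + C * \<rho>"
    using near l1_norm_diff_commute[of l v w] \<open>norm x = 1\<close> \<open>C \<ge> 0\<close> by (simp add: mult_left_mono)
  finally show ?thesis
    using \<rho> by (simp add: algebra_simps)
qed

lemma average_of_witnesses_lower_bound:
  fixes b :: "nat \<Rightarrow> 'a::complex_inner \<Rightarrow> 'a"
  assumes "\<forall>j<l. bounded_op (b j)" and C: "\<forall>j<l. \<forall>x. norm (b j x) \<le> C * norm x"
    and "C \<ge> 0" and "\<delta> > 0" and \<rho>: "(\<delta> + C) * \<rho> \<le> \<delta> / 2" and "finite V"
    and net: "\<forall>u. l1_norm l u = 1 \<longrightarrow> (\<exists>w\<in>V. l1_norm l (\<lambda>i. u i - w i) \<le> \<rho>)"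
    and witness: "\<forall>w\<in>V. norm (x w) = 1 \<and> \<delta> * l1_norm l w \<le> norm (lin_comb_op l w b (x w))"
    and orth: "\<forall>w\<in>V. \<forall>w'\<in>V. w \<noteq> w' \<longrightarrow> (\<forall>i<l. \<forall>j<l. cinner (b i (x w)) (b j (x w')) = 0)"
    and u: "l1_norm l u = 1"
  shows "(\<delta> / 2)\<^sup>2 / card V
    \<le> (norm (lin_comb_op l u b (scaleC (complex_of_real (1 / sqrt (card V))) (\<Sum>w\<in>V. x w))))\<^sup>2"
proof -
  obtain w where "w \<in> V" and "l1_norm l (\<lambda>i. u i - w i) \<le> \<rho>"
    using net u by blast
  then have "\<delta> / 2 \<le> norm (lin_comb_op l u b (x w))"
    using lower_bound_near_net_point[OF C \<open>C \<ge> 0\<close> _ \<rho> u] witness \<open>\<delta> > 0\<close> by simp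
  then have "(\<delta> / 2)\<^sup>2 \<le> (norm (lin_comb_op l u b (x w)))\<^sup>2"
    by (rule power_mono) (use \<open>\<delta> > 0\<close> in simp)
  also have "\<dots> \<le> (\<Sum>w\<in>V. (norm (lin_comb_op l u b (x w)))\<^sup>2)"
    using \<open>finite V\<close> \<open>w \<in> V\<close> by (intro member_le_sum) auto
  finally have "(\<delta> / 2)\<^sup>2 \<le> (\<Sum>w\<in>V. (norm (lin_comb_op l u b (x w)))\<^sup>2)" .
  moreover have "(norm (lin_comb_op l u b (scaleC (complex_of_real (1 / sqrt (card V))) (\<Sum>w\<in>V. x w))))\<^sup>2
      = (\<Sum>w\<in>V. (norm (lin_comb_op l u b (x w)))\<^sup>2) / card V"
    using orth by (intro power2_norm_orthogonal_average bounded_op_lin_comb_op assms(1) \<open>finite V\<close>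
        cinner_lin_comb_op_eq_0) auto
  ultimately show ?thesis
    by (simp add: divide_right_mono)
qed

lemma orthogonal_witnesses:
  fixes b :: "nat \<Rightarrow> 'a::chilbert_space \<Rightarrow> 'a"
  assumes bounded: "\<forall>j<l. bounded_op (b j)" and "finite V" and "finite E"
    and \<delta>: "\<forall>v E. finite E \<longrightarrow>
      (\<exists>x. norm x = 1 \<and> (\<forall>e\<in>E. cinner x e = 0) \<and> \<delta> * l1_norm l v \<le> norm (lin_comb_op l v b x))"
  shows "\<exists>x. (\<forall>w\<in>V. norm (x w) = 1 \<and> (\<forall>e\<in>E. cinner (x w) e = 0) \<and>
      \<delta> * l1_norm l w \<le> norm (lin_comb_op l w b (x w))) \<and>
    (\<forall>w\<in>V. \<forall>w'\<in>V. w \<noteq> w' \<longrightarrow>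
      cinner (x w) (x w') = 0 \<and> (\<forall>i<l. \<forall>j<l. cinner (b i (x w)) (b j (x w')) = 0))"
proof -
  define B where "B = insert (\<lambda>x. x) (b ` {..<l})"
  have "finite B" and "\<forall>T\<in>B. bounded_op T"
    using bounded bounded_op_id by (auto simp: B_def)
  moreover have "\<forall>w\<in>V. \<forall>E'. finite E' \<longrightarrow> (\<exists>x. (\<forall>e\<in>E'. cinner x e = 0) \<and>
      norm x = 1 \<and> (\<forall>e\<in>E. cinner x e = 0) \<and> \<delta> * l1_norm l w \<le> norm (lin_comb_op l w b x))"
  proof (intro ballI allI impI)
    fix w and E' :: "'a set"
    assume "finite E'"
    then show "\<exists>x. (\<forall>e\<in>E'. cinner x e = 0) \<and>
      norm x = 1 \<and> (\<forall>e\<in>E. cinner x e = 0) \<and> \<delta> * l1_norm l w \<le> norm (lin_comb_op l w b x)"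
      using \<delta>[rule_format, of "E \<union> E'" w] \<open>finite E\<close> by auto
  qed
  ultimately have "\<exists>x. (\<forall>w\<in>V. norm (x w) = 1 \<and> (\<forall>e\<in>E. cinner (x w) e = 0) \<and>
      \<delta> * l1_norm l w \<le> norm (lin_comb_op l w b (x w))) \<and>
    (\<forall>w\<in>V. \<forall>w'\<in>V. w \<noteq> w' \<longrightarrow> (\<forall>S\<in>B. \<forall>T\<in>B. cinner (S (x w)) (T (x w')) = 0))"
    by (rule orthogonal_family_off_finite[where P = "\<lambda>w x. norm x = 1 \<and>
        (\<forall>e\<in>E. cinner x e = 0) \<and> \<delta> * l1_norm l w \<le> norm (lin_comb_op l w b x)",
        OF _ _ \<open>finite V\<close>])
  then obtain x where x: "\<forall>w\<in>V. norm (x w) = 1 \<and> (\<forall>e\<in>E. cinner (x w) e = 0) \<and>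
      \<delta> * l1_norm l w \<le> norm (lin_comb_op l w b (x w))"
    and orth: "\<forall>w\<in>V. \<forall>w'\<in>V. w \<noteq> w' \<longrightarrow> (\<forall>S\<in>B. \<forall>T\<in>B. cinner (S (x w)) (T (x w')) = 0)"
    by (elim exE conjE)
  have idB: "(\<lambda>x. x) \<in> B" and bB: "\<forall>i<l. b i \<in> B"
    by (simp_all add: B_def)
  have "cinner (x w) (x w') = 0 \<and> (\<forall>i<l. \<forall>j<l. cinner (b i (x w)) (b j (x w')) = 0)"
    if "w \<in> V" "w' \<in> V" "w \<noteq> w'" for w w'
  proof -
    have all: "\<forall>S\<in>B. \<forall>T\<in>B. cinner (S (x w)) (T (x w')) = 0"
      using orth that by blast
    show ?thesis
      using bspec[OF bspec[OF all idB] idB] all bB by simp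
  qed
  then show ?thesis
    using x by (intro exI[of _ x]) blast
qed

theorem uniform_lower_bound_off_finite:
  fixes b :: "nat \<Rightarrow> 'a::chilbert_space \<Rightarrow> 'a"
  assumes "l \<ge> 1" and bounded: "\<forall>j<l. bounded_op (b j)" and "lin_indep_mod_compact l b"
  shows "\<exists>\<gamma>>0. \<forall>E. finite E \<longrightarrow> (\<exists>\<xi>. norm \<xi> = 1 \<and> (\<forall>e\<in>E. cinner \<xi> e = 0) \<and>
    (\<forall>v. \<gamma> * (l1_norm l v)\<^sup>2 \<le> (norm (lin_comb_op l v b \<xi>))\<^sup>2))"
proof -
  obtain \<delta> where "\<delta> > 0" and \<delta>: "\<forall>v E. finite E \<longrightarrow>
      (\<exists>x. norm x = 1 \<and> (\<forall>e\<in>E. cinner x e = 0) \<and> \<delta> * l1_norm l v \<le> norm (lin_comb_op l v b x))"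
    using essential_lower_bound[OF assms] by blast
  obtain C where "C > 0" and C: "\<forall>j<l. \<forall>x. norm (b j x) \<le> C * norm x"
    using bounded_ops_uniform_bound[OF bounded] by blast
  define \<rho> where "\<rho> = \<delta> / (2 * (\<delta> + C))"
  have "\<delta> + C > 0"
    using \<open>\<delta> > 0\<close> \<open>C > 0\<close> by simp
  then have "\<rho> > 0" and "\<rho> * (\<delta> + C) = \<delta> / 2"
    unfolding \<rho>_def using \<open>\<delta> > 0\<close> by (simp_all add: field_simps)
  then have \<rho>: "(\<delta> + C) * \<rho> \<le> \<delta> / 2"
    by (simp add: mult.commute)
  obtain V where "finite V"
    and net: "\<forall>u. l1_norm l u = 1 \<longrightarrow> (\<exists>w\<in>V. l1_norm l (\<lambda>i. u i - w i) \<le> \<rho>)"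
    using l1_sphere_finite_net[OF \<open>\<rho> > 0\<close>] by blast
  then have "V \<noteq> {}"
    using l1_norm_unit_vector[of 0 l] \<open>l \<ge> 1\<close> by fastforce
  define \<gamma> where "\<gamma> = (\<delta> / 2)\<^sup>2 / card V"
  have "\<gamma> > 0"
    using \<open>\<delta> > 0\<close> \<open>finite V\<close> \<open>V \<noteq> {}\<close> by (simp add: \<gamma>_def card_gt_0_iff)
  moreover have "\<exists>\<xi>. norm \<xi> = 1 \<and> (\<forall>e\<in>E. cinner \<xi> e = 0) \<and>
      (\<forall>v. \<gamma> * (l1_norm l v)\<^sup>2 \<le> (norm (lin_comb_op l v b \<xi>))\<^sup>2)" if "finite E" for E
  proof -
    obtain x where x: "\<forall>w\<in>V. norm (x w) = 1 \<and> (\<forall>e\<in>E. cinner (x w) e = 0) \<and>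
        \<delta> * l1_norm l w \<le> norm (lin_comb_op l w b (x w))"
      and orth: "\<forall>w\<in>V. \<forall>w'\<in>V. w \<noteq> w' \<longrightarrow>
        cinner (x w) (x w') = 0 \<and> (\<forall>i<l. \<forall>j<l. cinner (b i (x w)) (b j (x w')) = 0)"
      using orthogonal_witnesses[OF bounded \<open>finite V\<close> \<open>finite E\<close> \<delta>] by (elim exE conjE)
    define \<xi> where "\<xi> = scaleC (complex_of_real (1 / sqrt (card V))) (\<Sum>w\<in>V. x w)"
    have "(norm \<xi>)\<^sup>2 = (\<Sum>w\<in>V. (norm (x w))\<^sup>2) / card V"
      unfolding \<xi>_def using orth
      by (intro power2_norm_orthogonal_average[OF bounded_op_id \<open>finite V\<close>]) auto
    then have "(norm \<xi>)\<^sup>2 = 1"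
      using x \<open>finite V\<close> \<open>V \<noteq> {}\<close> by simp
    then have "norm \<xi> = 1"
      using norm_ge_zero[of \<xi>] by (simp add: power2_eq_1_iff)
    moreover have "\<forall>e\<in>E. cinner \<xi> e = 0"
      using x by (simp add: \<xi>_def cinner_scaleC_left cinner_sum_left)
    moreover have "\<gamma> \<le> (norm (lin_comb_op l u b \<xi>))\<^sup>2" if "l1_norm l u = 1" for u
      unfolding \<gamma>_def \<xi>_def using x orth that \<open>C > 0\<close>
      by (intro average_of_witnesses_lower_bound[OF bounded C _ \<open>\<delta> > 0\<close> \<rho> \<open>finite V\<close> net]) auto
    ultimately show ?thesis
      using lin_comb_op_lower_bound_homogeneous by blast
  qed
  ultimately show ?thesis
    by blast
qed

section \<open>Limits of the matrices \<open>Q(b, \<xi>)\<close>\<close>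

definition quad_form :: "nat \<Rightarrow> (nat \<Rightarrow> nat \<Rightarrow> complex) \<Rightarrow> (nat \<Rightarrow> complex) \<Rightarrow> complex" where
  "quad_form l M v = (\<Sum>i<l. \<Sum>j<l. cnj (v i) * M i j * v j)"

lemma pos_def_mat_iff:
  "pos_def_mat l M \<longleftrightarrow> (\<forall>i<l. \<forall>j<l. M j i = cnj (M i j)) \<and>
    (\<forall>v. (\<exists>i<l. v i \<noteq> 0) \<longrightarrow> 0 < Re (quad_form l M v))"
  by (simp add: pos_def_mat_def quad_form_def)

lemma quad_form_Qmat:
  "quad_form l (Qmat b \<xi>) v = complex_of_real ((norm (lin_comb_op l v b \<xi>))\<^sup>2)"
proof -
  have "cinner (lin_comb_op l v b \<xi>) (lin_comb_op l v b \<xi>)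
      = (\<Sum>i<l. \<Sum>j<l. cinner (scaleC (v j) (b j \<xi>)) (scaleC (v i) (b i \<xi>)))"
    unfolding lin_comb_op_def by (simp only: cinner_sum_left cinner_sum_right)
  also have "\<dots> = quad_form l (Qmat b \<xi>) v"
    by (simp add: quad_form_def Qmat_def cinner_scaleC_left cinner_scaleC_right mult_ac)
  finally show ?thesis
    by (simp add: cinner_self_eq_power2_norm)
qed

lemma tendsto_quad_form:
  assumes "\<forall>i<l. \<forall>j<l. ((\<lambda>\<alpha>. A \<alpha> i j) \<longlongrightarrow> M i j) F"
  shows "((\<lambda>\<alpha>. quad_form l (A \<alpha>) v) \<longlongrightarrow> quad_form l M v) F"
  unfolding quad_form_def using assms by (intro tendsto_intros) auto

theorem lin_indep_mod_compact_of_weakly_null: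
  fixes b :: "nat \<Rightarrow> 'a::chilbert_space \<Rightarrow> 'a" and \<xi> :: "'i \<Rightarrow> 'a"
  assumes "F \<noteq> bot" and unit: "\<forall>\<alpha>. norm (\<xi> \<alpha>) = 1"
    and weakly_null: "\<forall>\<eta>. ((\<lambda>\<alpha>. cinner (\<xi> \<alpha>) \<eta>) \<longlongrightarrow> 0) F"
    and lim: "\<forall>i<l. \<forall>j<l. ((\<lambda>\<alpha>. Qmat b (\<xi> \<alpha>) i j) \<longlongrightarrow> M i j) F"
    and "pos_def_mat l M"
  shows "lin_indep_mod_compact l b"
  unfolding lin_indep_mod_compact_iff
proof (rule allI, rule impI)
  fix c
  assume "compact_op (lin_comb_op l c b)"
  then have "((\<lambda>\<alpha>. (norm (lin_comb_op l c b (\<xi> \<alpha>)))\<^sup>2) \<longlongrightarrow> 0) F"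
    using unit weakly_null by (intro compact_op_weakly_null_tendsto) auto
  moreover have "((\<lambda>\<alpha>. (norm (lin_comb_op l c b (\<xi> \<alpha>)))\<^sup>2) \<longlongrightarrow> Re (quad_form l M c)) F"
    using tendsto_Re[OF tendsto_quad_form[OF lim, of c]] by (simp add: quad_form_Qmat)
  ultimately have "Re (quad_form l M c) = 0"
    using tendsto_unique[OF \<open>F \<noteq> bot\<close>] by blast
  then show "\<forall>j<l. c j = 0"
    using \<open>pos_def_mat l M\<close> by (auto simp: pos_def_mat_iff)
qed

lemma exists_weakly_null_filter:
  fixes W :: "'a::complex_inner set"
  assumes "\<And>E. finite E \<Longrightarrow> \<exists>\<xi>\<in>W. \<forall>e\<in>E. cinner \<xi> e = 0"
  shows "\<exists>F. F \<noteq> bot \<and> eventually (\<lambda>\<xi>. \<xi> \<in> W) F \<and> (\<forall>\<eta>. eventually (\<lambda>\<xi>. cinner \<xi> \<eta> = 0) F)"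
proof -
  define F where "F = (INF \<eta>. principal {\<xi>\<in>W. cinner \<xi> \<eta> = 0})"
  have "F \<noteq> bot"
    unfolding F_def
  proof (rule INF_filter_not_bot)
    fix X :: "'a set"
    assume "finite X"
    then obtain \<xi> where "\<xi> \<in> W" "\<forall>e\<in>X. cinner \<xi> e = 0"
      using assms by blast
    then show "(INF \<eta>\<in>X. principal {\<xi>\<in>W. cinner \<xi> \<eta> = 0}) \<noteq> bot"
      using \<open>finite X\<close> by (auto simp: INF_principal_finite principal_eq_bot_iff)
  qed
  moreover have ev: "eventually (\<lambda>\<xi>. \<xi> \<in> W \<and> cinner \<xi> \<eta> = 0) F" for \<eta>
    unfolding F_def by (rule eventually_INF1[of \<eta>]) (auto simp: eventually_principal)
  moreover have "eventually (\<lambda>\<xi>. \<xi> \<in> W) F"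
    using ev[of 0] by (rule eventually_mono) simp
  moreover have "eventually (\<lambda>\<xi>. cinner \<xi> \<eta> = 0) F" for \<eta>
    using ev[of \<eta>] by (rule eventually_mono) simp
  ultimately show ?thesis
    by blast
qed

lemma bounded_has_cluster_value:
  fixes f :: "'b \<Rightarrow> complex"
  assumes "G \<noteq> bot" and bounded: "eventually (\<lambda>\<alpha>. cmod (f \<alpha>) \<le> B) G"
  shows "\<exists>z. inf G (filtercomap f (nhds z)) \<noteq> bot"
proof -
  have "filtermap f G \<noteq> bot"
    using \<open>G \<noteq> bot\<close> by (simp add: filtermap_bot_iff)
  moreover have "eventually (\<lambda>z. z \<in> cball 0 B) (filtermap f G)"
    using bounded by (simp add: eventually_filtermap)
  ultimately obtain z where z: "inf (nhds z) (filtermap f G) \<noteq> bot"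
    using compact_filter[THEN iffD1, OF compact_cball[of "0::complex" B]] by blast
  show ?thesis
  proof (intro exI notI)
    assume "inf G (filtercomap f (nhds z)) = bot"
    then obtain Q R where "eventually Q G" and R: "eventually R (filtercomap f (nhds z))"
      and QR: "\<forall>x. Q x \<and> R x \<longrightarrow> False"
      using eventually_False[of "inf G (filtercomap f (nhds z))"] unfolding eventually_inf by blast
    obtain S where "eventually S (nhds z)" and SR: "\<forall>x. S (f x) \<longrightarrow> R x"
      using R unfolding eventually_filtercomap by blast
    have "eventually (\<lambda>x. \<not> S (f x)) G"
      using \<open>eventually Q G\<close> by (rule eventually_mono) (use QR SR in blast)
    then have "eventually (\<lambda>y. \<not> S y) (filtermap f G)"
      by (simp add: eventually_filtermap)
    then have "eventually (\<lambda>y. False) (inf (nhds z) (filtermap f G))"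
      unfolding eventually_inf using \<open>eventually S (nhds z)\<close> by blast
    then show False
      using z by simp
  qed
qed

lemma exists_finer_filter_tendsto:
  fixes f :: "'p \<Rightarrow> 'b \<Rightarrow> complex"
  assumes "finite P" and "G \<noteq> bot" and "\<forall>p\<in>P. eventually (\<lambda>\<alpha>. cmod (f p \<alpha>) \<le> B) G"
  shows "\<exists>G' c. G' \<noteq> bot \<and> G' \<le> G \<and> (\<forall>p\<in>P. (f p \<longlongrightarrow> c p) G')"
  using assms(1,3)
proof (induction P rule: finite_induct)
  case empty
  show ?case
    using \<open>G \<noteq> bot\<close> by blast
next
  case (insert q P)
  then obtain G1 c where "G1 \<noteq> bot" "G1 \<le> G" and c: "\<forall>p\<in>P. (f p \<longlongrightarrow> c p) G1"
    by auto
  have "eventually (\<lambda>\<alpha>. cmod (f q \<alpha>) \<le> B) G1"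
    using insert.prems \<open>G1 \<le> G\<close> filter_leD by blast
  then obtain z where "inf G1 (filtercomap (f q) (nhds z)) \<noteq> bot" (is "?G2 \<noteq> bot")
    using bounded_has_cluster_value[OF \<open>G1 \<noteq> bot\<close>] by blast
  moreover have "?G2 \<le> G"
    using \<open>G1 \<le> G\<close> by (simp add: le_infI1)
  moreover have "(f q \<longlongrightarrow> z) ?G2"
    unfolding filterlim_iff_le_filtercomap by simp
  moreover have "\<forall>p\<in>P. (f p \<longlongrightarrow> c p) ?G2"
    using c tendsto_mono inf_le1 by blast
  ultimately show ?case
    using \<open>q \<notin> P\<close> by (intro exI[of _ ?G2] exI[of _ "c(q := z)"]) auto
qed

lemma cmod_Qmat_le:
  assumes "\<forall>j<l. \<forall>x. norm (b j x) \<le> C * norm x" and "i < l" "j < l" and "norm \<xi> = 1"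
  shows "cmod (Qmat b \<xi> i j) \<le> C * C"
proof -
  have bound: "norm (b k \<xi>) \<le> C" if "k < l" for k
    using assms(1,4) that by (metis mult_1_right)
  have "cmod (Qmat b \<xi> i j) \<le> norm (b j \<xi>) * norm (b i \<xi>)"
    unfolding Qmat_def by (rule norm_cinner_le)
  also have "\<dots> \<le> C * C"
    using bound[OF \<open>i < l\<close>] bound[OF \<open>j < l\<close>]
    by (intro mult_mono) (auto intro: order_trans[OF norm_ge_zero])
  finally show ?thesis .
qed

lemma exists_finer_filter_Qmat_tendsto:
  assumes "F0 \<noteq> bot" and C: "\<forall>j<l. \<forall>x. norm (b j x) \<le> C * norm x"
    and unit: "eventually (\<lambda>\<xi>. norm \<xi> = 1) F0"
  shows "\<exists>F M. F \<noteq> bot \<and> F \<le> F0 \<and> (\<forall>i<l. \<forall>j<l. ((\<lambda>\<xi>. Qmat b \<xi> i j) \<longlongrightarrow> M i j) F)"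
proof -
  have "eventually (\<lambda>\<xi>. cmod (Qmat b \<xi> i j) \<le> C * C) F0" if "i < l" "j < l" for i j
    using unit by (rule eventually_mono) (rule cmod_Qmat_le[OF C that])
  then have "\<forall>p\<in>{..<l} \<times> {..<l}. eventually (\<lambda>\<xi>. cmod (Qmat b \<xi> (fst p) (snd p)) \<le> C * C) F0"
    by auto
  then have "\<exists>F c. F \<noteq> bot \<and> F \<le> F0 \<and>
      (\<forall>p\<in>{..<l} \<times> {..<l}. ((\<lambda>\<xi>. Qmat b \<xi> (fst p) (snd p)) \<longlongrightarrow> c p) F)"
    by (intro exists_finer_filter_tendsto[OF _ \<open>F0 \<noteq> bot\<close>]) simp_all
  then obtain F c where "F \<noteq> bot" "F \<le> F0"
    and "\<forall>p\<in>{..<l} \<times> {..<l}. ((\<lambda>\<xi>. Qmat b \<xi> (fst p) (snd p)) \<longlongrightarrow> c p) F"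
    by blast
  then show ?thesis
    by (intro exI[of _ F] exI[of _ "\<lambda>i j. c (i, j)"]) auto
qed

lemma pos_def_mat_limit:
  assumes "F \<noteq> bot" and "\<gamma> > 0"
    and lim: "\<forall>i<l. \<forall>j<l. ((\<lambda>\<alpha>. Qmat b (\<xi> \<alpha>) i j) \<longlongrightarrow> M i j) F"
    and lower: "eventually (\<lambda>\<alpha>. \<forall>v. \<gamma> * (l1_norm l v)\<^sup>2 \<le> (norm (lin_comb_op l v b (\<xi> \<alpha>)))\<^sup>2) F"
  shows "pos_def_mat l M"
  unfolding pos_def_mat_iff
proof (intro conjI allI impI)
  fix i j
  assume "i < l" "j < l"
  have "((\<lambda>\<alpha>. Qmat b (\<xi> \<alpha>) j i) \<longlongrightarrow> cnj (M i j)) F"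
    using tendsto_cnj[of "\<lambda>\<alpha>. Qmat b (\<xi> \<alpha>) i j"] lim \<open>i < l\<close> \<open>j < l\<close>
    by (simp add: Qmat_def cinner_commute[of "b i _"])
  then show "M j i = cnj (M i j)"
    using lim \<open>i < l\<close> \<open>j < l\<close> tendsto_unique[OF \<open>F \<noteq> bot\<close>] by blast
next
  fix v :: "nat \<Rightarrow> complex"
  assume "\<exists>i<l. v i \<noteq> 0"
  then have "0 < \<gamma> * (l1_norm l v)\<^sup>2"
    using \<open>\<gamma> > 0\<close> l1_norm_pos_iff[of l v] by simp
  also have "\<gamma> * (l1_norm l v)\<^sup>2 \<le> Re (quad_form l M v)"
  proof (rule tendsto_lowerbound[OF _ _ \<open>F \<noteq> bot\<close>])
    show "((\<lambda>\<alpha>. Re (quad_form l (Qmat b (\<xi> \<alpha>)) v)) \<longlongrightarrow> Re (quad_form l M v)) F"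
      by (intro tendsto_Re tendsto_quad_form lim)
    show "eventually (\<lambda>\<alpha>. \<gamma> * (l1_norm l v)\<^sup>2 \<le> Re (quad_form l (Qmat b (\<xi> \<alpha>)) v)) F"
      using lower by (rule eventually_mono) (simp add: quad_form_Qmat)
  qed
  finally show "0 < Re (quad_form l M v)" .
qed

theorem exists_weakly_null_net:
  fixes b :: "nat \<Rightarrow> 'a::chilbert_space \<Rightarrow> 'a"
  assumes "l \<ge> 1" and bounded: "\<forall>j<l. bounded_op (b j)" and "lin_indep_mod_compact l b"
  shows "\<exists>(F :: 'a filter) (\<xi> :: 'a \<Rightarrow> 'a). F \<noteq> bot \<and> (\<forall>\<alpha>. norm (\<xi> \<alpha>) = 1) \<and>
    (\<forall>\<eta>. ((\<lambda>\<alpha>. cinner (\<xi> \<alpha>) \<eta>) \<longlongrightarrow> 0) F) \<and>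
    (\<exists>M. (\<forall>i<l. \<forall>j<l. ((\<lambda>\<alpha>. Qmat b (\<xi> \<alpha>) i j) \<longlongrightarrow> M i j) F) \<and> pos_def_mat l M)"
proof -
  obtain \<gamma> where "\<gamma> > 0" and \<gamma>: "\<forall>E. finite E \<longrightarrow> (\<exists>\<xi>. norm \<xi> = 1 \<and> (\<forall>e\<in>E. cinner \<xi> e = 0) \<and>
      (\<forall>v. \<gamma> * (l1_norm l v)\<^sup>2 \<le> (norm (lin_comb_op l v b \<xi>))\<^sup>2))"
    using uniform_lower_bound_off_finite[OF assms] by blast
  define W where "W = {\<xi>. norm \<xi> = 1 \<and> (\<forall>v. \<gamma> * (l1_norm l v)\<^sup>2 \<le> (norm (lin_comb_op l v b \<xi>))\<^sup>2)}"
  obtain F0 where "F0 \<noteq> bot" and "eventually (\<lambda>\<xi>. \<xi> \<in> W) F0"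
    and F0: "\<forall>\<eta>. eventually (\<lambda>\<xi>. cinner \<xi> \<eta> = 0) F0"
    using exists_weakly_null_filter[of W] \<gamma> unfolding W_def by blast
  obtain C where C: "\<forall>j<l. \<forall>x. norm (b j x) \<le> C * norm x"
    using bounded_ops_uniform_bound[OF bounded] by blast
  have "eventually (\<lambda>\<xi>. norm \<xi> = 1) F0"
    using \<open>eventually (\<lambda>\<xi>. \<xi> \<in> W) F0\<close> by (rule eventually_mono) (simp add: W_def)
  then obtain F M where "F \<noteq> bot" "F \<le> F0"
    and M: "\<forall>i<l. \<forall>j<l. ((\<lambda>\<xi>. Qmat b \<xi> i j) \<longlongrightarrow> M i j) F"
    using exists_finer_filter_Qmat_tendsto[OF \<open>F0 \<noteq> bot\<close> C] by blast
  \<comment> \<open>the net is the identity, redefined off \<open>W\<close> to make it unit-valued everywhere\<close>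
  obtain w0 where "w0 \<in> W"
    using \<gamma>[rule_format, of "{}"] unfolding W_def by auto
  define \<xi> where "\<xi> \<alpha> = (if \<alpha> \<in> W then \<alpha> else w0)" for \<alpha>
  have "eventually (\<lambda>\<alpha>. \<alpha> \<in> W) F"
    using \<open>eventually (\<lambda>\<xi>. \<xi> \<in> W) F0\<close> \<open>F \<le> F0\<close> filter_leD by blast
  then have ev\<xi>: "eventually (\<lambda>\<alpha>. \<xi> \<alpha> = \<alpha> \<and> \<xi> \<alpha> \<in> W) F"
    by (rule eventually_mono) (simp add: \<xi>_def)
  have "\<forall>\<alpha>. norm (\<xi> \<alpha>) = 1"
    using \<open>w0 \<in> W\<close> by (simp add: \<xi>_def W_def)
  moreover have "((\<lambda>\<alpha>. cinner (\<xi> \<alpha>) \<eta>) \<longlongrightarrow> 0) F" for \<eta>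
    using eventually_conj[OF ev\<xi> filter_leD[OF \<open>F \<le> F0\<close> F0[rule_format, of \<eta>]]]
    by (intro tendsto_eventually) (auto elim: eventually_mono)
  moreover have lim: "\<forall>i<l. \<forall>j<l. ((\<lambda>\<alpha>. Qmat b (\<xi> \<alpha>) i j) \<longlongrightarrow> M i j) F"
  proof (intro allI impI)
    fix i j
    assume "i < l" "j < l"
    have "eventually (\<lambda>\<alpha>. Qmat b \<alpha> i j = Qmat b (\<xi> \<alpha>) i j) F"
      using ev\<xi> by (rule eventually_mono) simp
    then show "((\<lambda>\<alpha>. Qmat b (\<xi> \<alpha>) i j) \<longlongrightarrow> M i j) F"
      using M \<open>i < l\<close> \<open>j < l\<close> by (auto intro: tendsto_cong[THEN iffD1])
  qed
  moreover have "pos_def_mat l M"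
    using ev\<xi> by (intro pos_def_mat_limit[OF \<open>F \<noteq> bot\<close> \<open>\<gamma> > 0\<close> lim]) (auto elim: eventually_mono
        simp: W_def)
  ultimately show ?thesis
    using \<open>F \<noteq> bot\<close> by (intro exI[of _ F] exI[of _ \<xi>] conjI exI[of _ M]) simp_all
qed

theorem lemma3p2:
  fixes b :: "nat \<Rightarrow> 'a::chilbert_space \<Rightarrow> 'a" and l :: nat
  assumes "l \<ge> 1"
    and "\<forall>j<l. bounded_op (b j)"
  shows "lin_indep_mod_compact l b \<longleftrightarrow>
    (\<exists>(F :: 'a filter) (\<xi> :: 'a \<Rightarrow> 'a). F \<noteq> bot \<and> (\<forall>\<alpha>. norm (\<xi> \<alpha>) = 1) \<and>
       (\<forall>\<eta>. ((\<lambda>\<alpha>. cinner (\<xi> \<alpha>) \<eta>) \<longlongrightarrow> 0) F) \<and>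
       (\<exists>M. (\<forall>i<l. \<forall>j<l. ((\<lambda>\<alpha>. Qmat b (\<xi> \<alpha>) i j) \<longlongrightarrow> M i j) F) \<and> pos_def_mat l M))"
  by (rule iffI, erule exists_weakly_null_net[OF assms],
      elim exE conjE, erule lin_indep_mod_compact_of_weakly_null; assumption)

end
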